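(* Let $S = \bigoplus_{d\geq 0} S_d$ be a finitely generated graded $\mathbb{C}$-algebra with $S_0 = \mathbb{C}$ and let $V \subseteq S_1$ be a subspace. The rational map $\varphi_V \colon \operatorname{Proj} S \dashrightarrow \mathbb{P}(V^* )$ is an injective morphism if and only if the morphism of affine cones $\widehat{\varphi}_V \colon \operatorname{Spec} S \to V^*$ is injective.
   Context: Both $\varphi_V$ and $\widehat{\varphi}_V$ are induced by the graded ring homomorphism $\operatorname{Sym}^\bullet V \to S$ extending the inclusion $V\subseteq S_1$, where $\mathbb{P}(V^* ) = \operatorname{Proj}\operatorname{Sym}^\bullet V$ and $V^* = \operatorname{Spec}\operatorname{Sym}^\bullet V$. Injectivity is on points. *)

theory Defs
  imports Main "HOL-Library.Complex_Order" Complex_Main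
begin

text \<open>A commutative ring 'a is made into a C-algebra through a ring homomorphism
  emb :: complex => 'a.  A grading is a family Sd :: nat => 'a set of homogeneous parts.\<close>

definition finsupp :: "(nat \<Rightarrow> 'a::zero) \<Rightarrow> bool" where
  "finsupp f \<longleftrightarrow> finite {d. f d \<noteq> 0}"

definition hom_decomp :: "(nat \<Rightarrow> 'a::comm_ring_1 set) \<Rightarrow> (nat \<Rightarrow> 'a) \<Rightarrow> bool" where
  "hom_decomp Sd f \<longleftrightarrow> finsupp f \<and> (\<forall>d. f d \<in> Sd d)"

definition hsum :: "(nat \<Rightarrow> 'a::comm_ring_1) \<Rightarrow> 'a" where
  "hsum f = (\<Sum>d\<in>{d. f d \<noteq> 0}. f d)"

definition C_subspace :: "(complex \<Rightarrow> 'a::comm_ring_1) \<Rightarrow> 'a set \<Rightarrow> bool" where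
  "C_subspace emb W \<longleftrightarrow> 0 \<in> W \<and> (\<forall>x\<in>W. \<forall>y\<in>W. x + y \<in> W) \<and> (\<forall>c. \<forall>x\<in>W. emb c * x \<in> W)"

definition alg_gen :: "(complex \<Rightarrow> 'a::comm_ring_1) \<Rightarrow> 'a set \<Rightarrow> 'a set" where
  "alg_gen emb G = \<Inter> {T. range emb \<subseteq> T \<and> G \<subseteq> T \<and>
      (\<forall>x\<in>T. \<forall>y\<in>T. x + y \<in> T \<and> x * y \<in> T \<and> - x \<in> T)}"

definition fg_graded_C_algebra ::
  "(complex \<Rightarrow> 'a::comm_ring_1) \<Rightarrow> (nat \<Rightarrow> 'a set) \<Rightarrow> bool" where
  "fg_graded_C_algebra emb Sd \<longleftrightarrow>
     \<comment> \<open>emb is an injective ring homomorphism C -> S\<close>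
     emb 1 = 1 \<and> (\<forall>a b. emb (a + b) = emb a + emb b) \<and> (\<forall>a b. emb (a * b) = emb a * emb b)
     \<and> inj emb
     \<comment> \<open>homogeneous parts are C-subspaces, multiplicative grading\<close>
     \<and> (\<forall>d. C_subspace emb (Sd d))
     \<and> (\<forall>d e. \<forall>x\<in>Sd d. \<forall>y\<in>Sd e. x * y \<in> Sd (d + e))
     \<comment> \<open>S is the direct sum of the Sd\<close>
     \<and> (\<forall>x. \<exists>f. hom_decomp Sd f \<and> x = hsum f)
     \<and> (\<forall>f. hom_decomp Sd f \<and> hsum f = 0 \<longrightarrow> (\<forall>d. f d = 0))
     \<comment> \<open>S_0 = C\<close>
     \<and> Sd 0 = range emb
     \<comment> \<open>finitely generated as a C-algebra\<close>
     \<and> (\<exists>G. finite G \<and> alg_gen emb G = UNIV)"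

definition is_ideal :: "'a::comm_ring_1 set \<Rightarrow> bool" where
  "is_ideal I \<longleftrightarrow> 0 \<in> I \<and> (\<forall>x\<in>I. \<forall>y\<in>I. x + y \<in> I) \<and> (\<forall>x\<in>I. \<forall>r. r * x \<in> I)"

definition is_prime_ideal :: "'a::comm_ring_1 set \<Rightarrow> bool" where
  "is_prime_ideal P \<longleftrightarrow> is_ideal P \<and> P \<noteq> UNIV \<and> (\<forall>a b. a * b \<in> P \<longrightarrow> a \<in> P \<or> b \<in> P)"

definition Spec_pts :: "'a::comm_ring_1 set set" where
  "Spec_pts = {P. is_prime_ideal P}"

definition homogeneous_ideal :: "(nat \<Rightarrow> 'a::comm_ring_1 set) \<Rightarrow> 'a set \<Rightarrow> bool" where
  "homogeneous_ideal Sd I \<longleftrightarrow> (\<forall>f. hom_decomp Sd f \<and> hsum f \<in> I \<longrightarrow> (\<forall>d. f d \<in> I))"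

definition irrelevant_ideal :: "(nat \<Rightarrow> 'a::comm_ring_1 set) \<Rightarrow> 'a set" where
  "irrelevant_ideal Sd = {x. \<exists>f. hom_decomp Sd f \<and> f 0 = 0 \<and> x = hsum f}"

definition Proj_pts :: "(nat \<Rightarrow> 'a::comm_ring_1 set) \<Rightarrow> 'a set set" where
  "Proj_pts Sd = {P. is_prime_ideal P \<and> homogeneous_ideal Sd P \<and> \<not> irrelevant_ideal Sd \<subseteq> P}"

text \<open>The map on points induced by Sym V -> S, expressed as contraction of a prime of S
  to the image subalgebra C[V] of Sym V in S (the map Spec C[V] -> Spec Sym V induced by
  the surjection Sym V -> C[V] is injective, identifying a prime with its preimage).
  The same map on homogeneous primes gives phi_V on the points of Proj S where it is
  defined, namely those P with V not contained in P.\<close>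
definition contract_V :: "(complex \<Rightarrow> 'a::comm_ring_1) \<Rightarrow> 'a set \<Rightarrow> 'a set \<Rightarrow> 'a set" where
  "contract_V emb V P = P \<inter> alg_gen emb V"

text \<open>phi_V is an (everywhere defined) morphism and injective on points.\<close>
definition phiV_injective_morphism ::
  "(complex \<Rightarrow> 'a::comm_ring_1) \<Rightarrow> (nat \<Rightarrow> 'a set) \<Rightarrow> 'a set \<Rightarrow> bool" where
  "phiV_injective_morphism emb Sd V \<longleftrightarrow>
     (\<forall>P\<in>Proj_pts Sd. \<not> V \<subseteq> P) \<and> inj_on (contract_V emb V) (Proj_pts Sd)"

definition phiV_hat_injective :: "(complex \<Rightarrow> 'a::comm_ring_1) \<Rightarrow> 'a set \<Rightarrow> bool" where
  "phiV_hat_injective emb V \<longleftrightarrow> inj_on (contract_V emb V) Spec_pts"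

end

theory Submission
  imports Defs "HOL-Computational_Algebra.Fundamental_Theorem_Algebra"
    "HOL-Analysis.Continuum_Not_Denumerable"
begin

text \<open>
  Both maps send a prime of \<open>S\<close> to its contraction to the subalgebra \<open>\<complex>[V]\<close> generated
  by \<open>V\<close>. If \<open>V\<close> lies in a point \<open>P\<close> of \<open>Proj S\<close>, then \<open>P\<close> and the irrelevant ideal
  \<open>S\<^sub>+\<close> have the same contraction (the ideal of the vertex of \<open>V\<^sup>*\<close>) although
  \<open>P \<noteq> S\<^sub>+\<close>; so injectivity on \<open>Spec S\<close> forces \<open>\<phi>\<^sub>V\<close> to be a morphism, and injectivity
  on \<open>Proj S\<close> is a special case.

  Conversely, let \<open>V\<close> have no base points. The Nullstellensatz, proved here from the
  uncountability of \<open>\<complex>\<close>, shows that every homogeneous element of positive degree has a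
  power in the ideal generated by \<open>V\<close>; hence \<open>S\<close> is a finite \<open>\<complex>[V]\<close>-module. Let primes
  \<open>P\<close>, \<open>Q\<close> have the same contraction and let \<open>s \<in> Q\<close>, \<open>s \<notin> P\<close>. The Nullstellensatz
  gives a closed point \<open>\<chi>\<close> vanishing on \<open>P\<close> with \<open>\<chi> s \<noteq> 0\<close>, and lying over (via
  Nakayama) a closed point \<open>\<chi>'\<close> vanishing on \<open>Q\<close> that agrees with \<open>\<chi>\<close> on \<open>\<complex>[V]\<close>.
  But closed points are separated by \<open>\<complex>[V]\<close>: if \<open>\<chi>\<close> vanishes on \<open>V\<close>, both \<open>\<chi>\<close> and \<open>\<chi>'\<close>
  are the vertex; otherwise the lines through \<open>\<chi>\<close> and \<open>\<chi>'\<close> are points of \<open>Proj S\<close> with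
  the same image under \<open>\<phi>\<^sub>V\<close>, hence equal, and along that line every element of \<open>S\<close>
  agrees with an element of \<open>\<complex>[V]\<close>. So \<open>\<chi> = \<chi>'\<close>, contradicting \<open>\<chi>' s = 0\<close>.
\<close>

section \<open>Polynomials\<close>

lemma map_poly_add:
  assumes "f 0 = 0" "\<And>x y. f (x + y) = f x + f y"
  shows "map_poly f (p + q) = map_poly f p + map_poly f q"
  by (rule poly_eqI) (simp add: coeff_map_poly assms)

lemma map_poly_mult:
  fixes f :: "'a::comm_ring_1 \<Rightarrow> 'b::comm_ring_1"
  assumes "f 0 = 0" "\<And>x y. f (x + y) = f x + f y" "\<And>x y. f (x * y) = f x * f y"
  shows "map_poly f (p * q) = map_poly f p * map_poly f q"
proof (induction p)
  case (pCons a p)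
  have "map_poly f (pCons a p * q) = map_poly f (smult a q + pCons 0 (p * q))"
    by simp
  also have "\<dots> = smult (f a) (map_poly f q) + pCons 0 (map_poly f p * map_poly f q)"
    by (simp add: map_poly_add map_poly_smult assms map_poly_pCons pCons)
  also have "\<dots> = map_poly f (pCons a p) * map_poly f q"
    by (simp add: map_poly_pCons assms)
  finally show ?case .
qed simp

lemma lagrange_basis_independent:
  fixes a :: "'a::field \<Rightarrow> 'a"
  assumes C: "finite C" and p: "(\<Sum>c\<in>C. smult (a c) (\<Prod>c'\<in>C - {c}. [:- c', 1:])) = 0"
    and "c0 \<in> C"
  shows "a c0 = 0"
proof -
  have "poly (\<Prod>c'\<in>C - {c}. [:- c', 1:]) c0 = 0" if "c \<in> C - {c0}" for c
    using that \<open>c0 \<in> C\<close> C by (auto simp: poly_prod intro: prod_zero)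
  then have "poly (\<Sum>c\<in>C. smult (a c) (\<Prod>c'\<in>C - {c}. [:- c', 1:])) c0
      = a c0 * poly (\<Prod>c'\<in>C - {c0}. [:- c', 1:]) c0"
    by (simp add: poly_sum sum.remove[OF C \<open>c0 \<in> C\<close>])
  moreover have "poly (\<Prod>c'\<in>C - {c0}. [:- c', 1:]) c0 \<noteq> 0"
    using C by (simp add: poly_prod)
  ultimately show ?thesis using p by simp
qed

section \<open>Ideals of a commutative ring\<close>

definition ideal_gen :: "'a::comm_ring_1 set \<Rightarrow> 'a set" where
  "ideal_gen X = \<Inter> {I. is_ideal I \<and> X \<subseteq> I}"

lemma is_ideal_ideal_gen: "is_ideal (ideal_gen X)"
  unfolding ideal_gen_def is_ideal_def by auto

lemma ideal_gen_superset: "X \<subseteq> ideal_gen X"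
  unfolding ideal_gen_def by auto

lemma ideal_gen_least: "is_ideal I \<Longrightarrow> X \<subseteq> I \<Longrightarrow> ideal_gen X \<subseteq> I"
  unfolding ideal_gen_def by auto

context
  fixes I :: "'a::comm_ring_1 set"
  assumes I: "is_ideal I"
begin

lemma ideal_0: "0 \<in> I"
  using I unfolding is_ideal_def by blast

lemma ideal_add: "x \<in> I \<Longrightarrow> y \<in> I \<Longrightarrow> x + y \<in> I"
  using I unfolding is_ideal_def by blast

lemma ideal_mult_left: "x \<in> I \<Longrightarrow> r * x \<in> I"
  using I unfolding is_ideal_def by blast

lemma ideal_mult_right: "x \<in> I \<Longrightarrow> x * r \<in> I"
  using ideal_mult_left[of x r] by (simp add: mult.commute)

lemma ideal_uminus: "x \<in> I \<Longrightarrow> - x \<in> I"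
  using ideal_mult_left[of x "- 1"] by simp

lemma ideal_diff: "x \<in> I \<Longrightarrow> y \<in> I \<Longrightarrow> x - y \<in> I"
  using ideal_add[of x "- y"] ideal_uminus by simp

lemma ideal_sum: "(\<And>i. i \<in> A \<Longrightarrow> f i \<in> I) \<Longrightarrow> sum f A \<in> I"
  by (induction A rule: infinite_finite_induct) (auto intro: ideal_0 ideal_add)

lemma ideal_eq_UNIV: "1 \<in> I \<Longrightarrow> I = UNIV"
  using ideal_mult_left[of 1] by auto

end

lemma prime_ideal_prod_notin:
  assumes "is_prime_ideal P" and "\<And>i. i \<in> A \<Longrightarrow> f i \<notin> P"
  shows "prod f A \<notin> P"
proof -
  have P: "is_ideal P" "P \<noteq> UNIV" "\<And>a b. a * b \<in> P \<Longrightarrow> a \<in> P \<or> b \<in> P"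
    using assms(1) unfolding is_prime_ideal_def by auto
  have "1 \<notin> P" using ideal_eq_UNIV[OF P(1)] P(2) by blast
  from assms(2) show ?thesis
  proof (induction A rule: infinite_finite_induct)
    case (insert i A)
    then show ?case using P(3) by auto
  qed (simp_all add: \<open>1 \<notin> P\<close>)
qed

lemma prime_ideal_power_notin: "is_prime_ideal P \<Longrightarrow> s \<notin> P \<Longrightarrow> s ^ k \<notin> P"
  using prime_ideal_prod_notin[of P "{..<k}" "\<lambda>_. s"] by simp

lemma is_ideal_Union_chain:
  assumes "\<C> \<noteq> {}" and "\<And>I. I \<in> \<C> \<Longrightarrow> is_ideal I"
    and "\<And>I J. I \<in> \<C> \<Longrightarrow> J \<in> \<C> \<Longrightarrow> I \<subseteq> J \<or> J \<subseteq> I"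
  shows "is_ideal (\<Union>\<C>)"
  unfolding is_ideal_def
proof (intro conjI ballI allI)
  show "0 \<in> \<Union>\<C>" using assms(1,2) ideal_0 by blast
next
  fix x y assume "x \<in> \<Union>\<C>" "y \<in> \<Union>\<C>"
  then obtain I J where IJ: "I \<in> \<C>" "J \<in> \<C>" and "x \<in> I" "y \<in> J" by blast
  from assms(3)[OF IJ] show "x + y \<in> \<Union>\<C>"
  proof
    assume "I \<subseteq> J"
    then have "x + y \<in> J" using ideal_add[OF assms(2)[OF IJ(2)]] \<open>x \<in> I\<close> \<open>y \<in> J\<close> by blast
    then show ?thesis using IJ(2) by blast
  next
    assume "J \<subseteq> I"
    then have "x + y \<in> I" using ideal_add[OF assms(2)[OF IJ(1)]] \<open>x \<in> I\<close> \<open>y \<in> J\<close> by blast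
    then show ?thesis using IJ(1) by blast
  qed
next
  fix x r assume "x \<in> \<Union>\<C>"
  then show "r * x \<in> \<Union>\<C>" using assms(2) ideal_mult_left by blast
qed

lemma is_ideal_add_multiples:
  assumes "is_ideal M"
  shows "is_ideal {m + x * y | m y. m \<in> M}"
  unfolding is_ideal_def
proof (intro conjI ballI allI)
  show "0 \<in> {m + x * y | m y. m \<in> M}"
    using ideal_0[OF assms] by (intro CollectI exI[of _ 0]) auto
next
  fix a b assume "a \<in> {m + x * y | m y. m \<in> M}" "b \<in> {m + x * y | m y. m \<in> M}"
  then obtain m1 y1 m2 y2 where "a = m1 + x * y1" "b = m2 + x * y2" "m1 \<in> M" "m2 \<in> M"
    by blast
  then show "a + b \<in> {m + x * y | m y. m \<in> M}"
    using ideal_add[OF assms, of m1 m2]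
    by (intro CollectI exI[of _ "m1 + m2"] exI[of _ "y1 + y2"]) (simp add: algebra_simps)
next
  fix a r assume "a \<in> {m + x * y | m y. m \<in> M}"
  then obtain m y where "a = m + x * y" "m \<in> M" by blast
  then show "r * a \<in> {m + x * y | m y. m \<in> M}"
    using ideal_mult_left[OF assms, of m r]
    by (intro CollectI exI[of _ "r * m"] exI[of _ "r * y"]) (simp add: algebra_simps)
qed

lemma ideal_avoiding_powers_maximal:
  fixes I :: "'a::comm_ring_1 set"
  assumes "is_ideal I" and "\<forall>k. s ^ k \<notin> I"
  obtains M where "is_ideal M" "I \<subseteq> M" "\<forall>k. s ^ k \<notin> M"
    "\<And>x. x \<notin> M \<Longrightarrow> \<exists>y k. x * y - s ^ k \<in> M"
proof -
  define \<A> where "\<A> = {J. is_ideal J \<and> I \<subseteq> J \<and> (\<forall>k. s ^ k \<notin> J)}"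
  have "\<exists>M\<in>\<A>. \<forall>J\<in>\<A>. M \<subseteq> J \<longrightarrow> J = M"
  proof (rule subset_Zorn_nonempty)
    show "\<A> \<noteq> {}" using assms unfolding \<A>_def by blast
  next
    fix \<C> assume \<C>: "\<C> \<noteq> {}" "subset.chain \<A> \<C>"
    then have "is_ideal (\<Union>\<C>)"
      by (intro is_ideal_Union_chain) (auto simp: \<A>_def subset_chain_def)
    then show "\<Union>\<C> \<in> \<A>" using \<C> by (auto simp: \<A>_def subset_chain_def)
  qed
  then obtain M where "M \<in> \<A>" and max: "\<forall>J\<in>\<A>. M \<subseteq> J \<longrightarrow> J = M" by blast
  then have M: "is_ideal M" "I \<subseteq> M" "\<forall>k. s ^ k \<notin> M" unfolding \<A>_def by auto
  have "\<exists>y k. x * y - s ^ k \<in> M" if "x \<notin> M" for x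
  proof -
    define J where "J = {m + x * y | m y. m \<in> M}"
    have J: "is_ideal J" unfolding J_def by (rule is_ideal_add_multiples[OF M(1)])
    have "m \<in> J" if "m \<in> M" for m
      using that unfolding J_def by (intro CollectI exI[of _ m] exI[of _ 0]) simp
    then have "M \<subseteq> J" by blast
    have "x \<in> J" unfolding J_def using ideal_0[OF M(1)] by (intro CollectI exI[of _ 0] exI[of _ 1]) simp
    then have "J \<notin> \<A>" using max \<open>M \<subseteq> J\<close> \<open>x \<notin> M\<close> by blast
    then obtain k where "s ^ k \<in> J" using J \<open>M \<subseteq> J\<close> M(2) unfolding \<A>_def by blast
    then obtain m y where "s ^ k = m + x * y" "m \<in> M" unfolding J_def by blast
    then have "x * y - s ^ k \<in> M" using ideal_uminus[OF M(1)] by (simp add: algebra_simps)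
    then show ?thesis by blast
  qed
  with M that show ?thesis by blast
qed

text \<open>The last property says that \<open>S / M\<close> becomes a field once \<open>s\<close> is inverted.\<close>

lemma prime_ideal_avoiding_powers:
  fixes I :: "'a::comm_ring_1 set"
  assumes "is_ideal I" and "\<forall>k. s ^ k \<notin> I"
  obtains M where "is_prime_ideal M" "I \<subseteq> M" "\<forall>k. s ^ k \<notin> M"
    "\<And>x. x \<notin> M \<Longrightarrow> \<exists>y k. x * y - s ^ k \<in> M"
proof -
  obtain M where M: "is_ideal M" "I \<subseteq> M" and sM: "\<forall>k. s ^ k \<notin> M"
    and inverse: "\<And>x. x \<notin> M \<Longrightarrow> \<exists>y k. x * y - s ^ k \<in> M"
    by (rule ideal_avoiding_powers_maximal[OF assms]) blast
  have "is_prime_ideal M"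
    unfolding is_prime_ideal_def
  proof (intro conjI allI impI)
    show "M \<noteq> UNIV" using sM by auto
  next
    fix a b assume ab: "a * b \<in> M"
    show "a \<in> M \<or> b \<in> M"
    proof (rule ccontr)
      assume "\<not> (a \<in> M \<or> b \<in> M)"
      then obtain y k z l where a: "a * y - s ^ k \<in> M" and b: "b * z - s ^ l \<in> M"
        using inverse by blast
      have "s ^ (k + l) = (a * b) * (y * z) - (a * y) * (b * z - s ^ l) - (a * y - s ^ k) * s ^ l"
        by (simp add: power_add algebra_simps)
      also have "\<dots> \<in> M"
        using ideal_mult_right[OF M(1) ab] ideal_mult_left[OF M(1) b] ideal_mult_right[OF M(1) a]
        by (intro ideal_diff[OF M(1)])
      finally show False using sM by blast
    qed
  qed (rule M(1))
  with M sM inverse that show ?thesis by blast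
qed

definition module_span :: "'a::comm_ring_1 set \<Rightarrow> 'a set \<Rightarrow> 'a set" where
  "module_span B E = {x. \<exists>b. (\<forall>e\<in>E. b e \<in> B) \<and> x = (\<Sum>e\<in>E. b e * e)}"

definition finite_over :: "'a::comm_ring_1 set \<Rightarrow> bool" where
  "finite_over B \<longleftrightarrow> (\<exists>E. finite E \<and> module_span B E = UNIV)"

definition is_ideal_in :: "'a::comm_ring_1 set \<Rightarrow> 'a set \<Rightarrow> bool" where
  "is_ideal_in B I \<longleftrightarrow> I \<subseteq> B \<and> 0 \<in> I \<and> (\<forall>x\<in>I. \<forall>y\<in>I. x + y \<in> I) \<and> (\<forall>x\<in>I. \<forall>r\<in>B. r * x \<in> I)"

section \<open>Algebras over the complex numbers\<close>

locale C_algebra =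
  fixes emb :: "complex \<Rightarrow> 'a::comm_ring_1"
  assumes emb_1 [simp]: "emb 1 = 1"
    and emb_add [simp]: "emb (a + b) = emb a + emb b"
    and emb_mult [simp]: "emb (a * b) = emb a * emb b"
begin

lemma emb_0 [simp]: "emb 0 = 0"
  using emb_add[of 0 0] by simp

lemma emb_uminus [simp]: "emb (- a) = - emb a"
  using emb_add[of a "- a"] by (simp add: eq_neg_iff_add_eq_0 add.commute)

lemma emb_diff [simp]: "emb (a - b) = emb a - emb b"
  using emb_add[of a "- b"] by simp

lemma emb_mult_inverse: "c \<noteq> 0 \<Longrightarrow> emb c * emb (inverse c) = 1"
  by (metis emb_1 emb_mult right_inverse)

lemma emb_notin_prime_ideal:
  assumes "is_prime_ideal M" and "c \<noteq> 0"
  shows "emb c \<notin> M"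
proof
  assume "emb c \<in> M"
  have M: "is_ideal M" "M \<noteq> UNIV" using assms(1) unfolding is_prime_ideal_def by auto
  have "emb c * emb (inverse c) \<in> M" using ideal_mult_right[OF M(1) \<open>emb c \<in> M\<close>] .
  then show False using emb_mult_inverse[OF assms(2)] ideal_eq_UNIV[OF M(1)] M(2) by simp
qed

sublocale vs: vector_space "\<lambda>c x. emb c * x"
  by unfold_locales (auto simp: algebra_simps)

lemma span_mult_closed:
  assumes B: "\<And>b b'. b \<in> B \<Longrightarrow> b' \<in> B \<Longrightarrow> b * b' \<in> B"
    and "x \<in> vs.span B" "y \<in> vs.span B"
  shows "x * y \<in> vs.span B"
proof -
  have left: "b * y \<in> vs.span B" if "b \<in> B" for b
    using \<open>y \<in> vs.span B\<close>
  proof (induction y rule: vs.span_induct_alt)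
    case (step c b' y)
    have "emb c * (b * b') + b * y \<in> vs.span B"
      by (rule vs.span_add[OF vs.span_scale[OF vs.span_base[OF B[OF \<open>b \<in> B\<close> step(1)]]] step(2)])
    then show ?case by (simp add: algebra_simps)
  qed (simp add: vs.span_zero)
  from \<open>x \<in> vs.span B\<close> show ?thesis
  proof (induction x rule: vs.span_induct_alt)
    case (step c b x)
    have "emb c * (b * y) + x * y \<in> vs.span B"
      by (rule vs.span_add[OF vs.span_scale[OF left[OF step(1)]] step(2)])
    then show ?case by (simp add: algebra_simps)
  qed (simp add: vs.span_zero)
qed

lemma card_independent_family_le:
  assumes C: "finite C" and F: "finite F" and "y ` C \<subseteq> vs.span F"
    and indep: "\<And>a. (\<Sum>c\<in>C. emb (a c) * y c) = 0 \<Longrightarrow> \<forall>c\<in>C. a c = 0"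
  shows "card C \<le> card F"
proof -
  have inj: "inj_on y C"
  proof (rule inj_onI, rule ccontr)
    fix c1 c2 assume c: "c1 \<in> C" "c2 \<in> C" "y c1 = y c2" "c1 \<noteq> c2"
    define a where "a c = (if c = c1 then 1 else if c = c2 then - 1 else (0::complex))" for c
    have "(\<Sum>c\<in>C. emb (a c) * y c) = (\<Sum>c\<in>{c1, c2}. emb (a c) * y c)"
      using c C by (intro sum.mono_neutral_right) (auto simp: a_def)
    also have "\<dots> = 0" using c by (simp add: a_def)
    finally show False using indep[of a] c by (auto simp: a_def)
  qed
  have "vs.independent (y ` C)"
  proof
    assume "vs.dependent (y ` C)"
    then obtain u where u: "\<exists>v\<in>y ` C. u v \<noteq> 0" "(\<Sum>v\<in>y ` C. emb (u v) * v) = 0"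
      using vs.dependent_finite[of "y ` C"] C by blast
    then have "(\<Sum>c\<in>C. emb (u (y c)) * y c) = 0" by (simp add: sum.reindex[OF inj])
    then show False using indep[of "u \<circ> y"] u(1) by auto
  qed
  then have "card (y ` C) \<le> card F"
    using vs.independent_span_bound[OF F] assms(3) by blast
  then show ?thesis using card_image[OF inj] by simp
qed

lemma alg_gen_emb: "emb c \<in> alg_gen emb X"
  and alg_gen_base: "x \<in> X \<Longrightarrow> x \<in> alg_gen emb X"
  and alg_gen_add: "x \<in> alg_gen emb X \<Longrightarrow> y \<in> alg_gen emb X \<Longrightarrow> x + y \<in> alg_gen emb X"
  and alg_gen_mult: "x \<in> alg_gen emb X \<Longrightarrow> y \<in> alg_gen emb X \<Longrightarrow> x * y \<in> alg_gen emb X"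
  and alg_gen_uminus: "x \<in> alg_gen emb X \<Longrightarrow> - x \<in> alg_gen emb X"
  unfolding alg_gen_def by blast+

lemma alg_gen_induct [consumes 1, case_names emb base add mult uminus]:
  assumes "x \<in> alg_gen emb X"
    and "\<And>c. P (emb c)" and "\<And>x. x \<in> X \<Longrightarrow> P x"
    and "\<And>x y. P x \<Longrightarrow> P y \<Longrightarrow> P (x + y)" and "\<And>x y. P x \<Longrightarrow> P y \<Longrightarrow> P (x * y)"
    and "\<And>x. P x \<Longrightarrow> P (- x)"
  shows "P x"
proof -
  have "{x. P x} \<in> {T. range emb \<subseteq> T \<and> X \<subseteq> T \<and> (\<forall>x\<in>T. \<forall>y\<in>T. x + y \<in> T \<and> x * y \<in> T \<and> - x \<in> T)}"
    using assms(2-) by (intro CollectI conjI ballI subsetI) auto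
  then have "alg_gen emb X \<subseteq> {x. P x}" unfolding alg_gen_def by (rule Inter_lower)
  with assms(1) show ?thesis by blast
qed

lemma alg_gen_0: "0 \<in> alg_gen emb X"
  using alg_gen_emb[of 0] by simp

lemma alg_gen_1: "1 \<in> alg_gen emb X"
  using alg_gen_emb[of 1] by simp

lemma alg_gen_diff: "x \<in> alg_gen emb X \<Longrightarrow> y \<in> alg_gen emb X \<Longrightarrow> x - y \<in> alg_gen emb X"
  using alg_gen_add[OF _ alg_gen_uminus, of x X y] by simp

lemma alg_gen_sum: "(\<And>i. i \<in> I \<Longrightarrow> f i \<in> alg_gen emb X) \<Longrightarrow> sum f I \<in> alg_gen emb X"
  by (induction I rule: infinite_finite_induct) (auto intro: alg_gen_0 alg_gen_add)

lemma alg_gen_power: "x \<in> alg_gen emb X \<Longrightarrow> x ^ n \<in> alg_gen emb X"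
  by (induction n) (auto intro: alg_gen_1 alg_gen_mult)

lemma alg_gen_mono:
  assumes "Y \<subseteq> alg_gen emb X"
  shows "alg_gen emb Y \<subseteq> alg_gen emb X"
proof
  fix x assume "x \<in> alg_gen emb Y"
  then show "x \<in> alg_gen emb X"
    by (induction rule: alg_gen_induct)
      (use assms in \<open>auto intro: alg_gen_emb alg_gen_add alg_gen_mult alg_gen_uminus\<close>)
qed

lemma alg_gen_subset_span_monomials: "alg_gen emb G \<subseteq> vs.span (prod_list ` lists G)"
proof
  fix x assume "x \<in> alg_gen emb G"
  then show "x \<in> vs.span (prod_list ` lists G)"
  proof (induction rule: alg_gen_induct)
    case (emb c)
    have "1 \<in> prod_list ` lists G" by (rule image_eqI[of _ _ "[]"]) auto
    then have "emb c * 1 \<in> vs.span (prod_list ` lists G)" by (intro vs.span_scale vs.span_base)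
    then show ?case by simp
  next
    case (base g)
    then have "g = prod_list [g]" "[g] \<in> lists G" by auto
    then show ?case by (blast intro: vs.span_base)
  next
    case (mult x y)
    have "b * b' \<in> prod_list ` lists G" if "b \<in> prod_list ` lists G" "b' \<in> prod_list ` lists G"
      for b b'
    proof -
      from that obtain l l' where "l \<in> lists G" "l' \<in> lists G" "b = prod_list l" "b' = prod_list l'"
        by blast
      then show ?thesis by (intro image_eqI[of _ _ "l @ l'"]) auto
    qed
    then show ?case using mult by (intro span_mult_closed)
  qed (auto intro: vs.span_add vs.span_neg)
qed

lemma in_span_finite_subset:
  assumes "x \<in> vs.span B"
  obtains F where "finite F" "F \<subseteq> B" "x \<in> vs.span F"
proof -
  obtain F r where F: "x = (\<Sum>a\<in>F. emb (r a) * a)" "finite F" "F \<subseteq> B"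
    using assms unfolding vs.span_explicit by blast
  have "x \<in> vs.span F" unfolding F(1) by (intro vs.span_sum vs.span_scale vs.span_base)
  with F(2,3) that show ?thesis by blast
qed

text \<open>The characters of \<open>S\<close>, i.e.\ the \<open>\<complex>\<close>-algebra homomorphisms \<open>S \<rightarrow> \<complex>\<close>, are the
  closed points of \<open>Spec S\<close>.\<close>

definition character :: "('a \<Rightarrow> complex) \<Rightarrow> bool" where
  "character \<chi> \<longleftrightarrow> (\<forall>x y. \<chi> (x + y) = \<chi> x + \<chi> y \<and> \<chi> (x * y) = \<chi> x * \<chi> y)
     \<and> (\<forall>c. \<chi> (emb c) = c)"

context
  fixes \<chi> assumes \<chi>: "character \<chi>"
begin

lemma character_add: "\<chi> (x + y) = \<chi> x + \<chi> y"
  and character_mult: "\<chi> (x * y) = \<chi> x * \<chi> y"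
  and character_emb [simp]: "\<chi> (emb c) = c"
  using \<chi> unfolding character_def by auto

lemma character_0 [simp]: "\<chi> 0 = 0"
  using character_emb[of 0] by simp

lemma character_1 [simp]: "\<chi> 1 = 1"
  using character_emb[of 1] by simp

lemma character_uminus: "\<chi> (- x) = - \<chi> x"
proof -
  have "\<chi> x + \<chi> (- x) = 0" using character_add[of x "- x"] by simp
  then show ?thesis by (simp add: eq_neg_iff_add_eq_0 add.commute)
qed

lemma character_diff: "\<chi> (x - y) = \<chi> x - \<chi> y"
  using character_add[of x "- y"] character_uminus[of y] by simp

lemma character_sum: "\<chi> (sum f A) = (\<Sum>a\<in>A. \<chi> (f a))"
  by (induction A rule: infinite_finite_induct) (auto simp: character_add)

lemma character_power: "\<chi> (x ^ n) = \<chi> x ^ n"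
  by (induction n) (auto simp: character_mult)

lemma character_kernel_prime: "is_prime_ideal {x. \<chi> x = 0}"
proof -
  have "1 \<notin> {x. \<chi> x = 0}" by simp
  then have "{x. \<chi> x = 0} \<noteq> UNIV" by blast
  then show ?thesis unfolding is_prime_ideal_def is_ideal_def
    by (simp add: character_add character_mult)
qed

end

lemma character_of_residues:
  assumes M: "is_prime_ideal M" and residues: "\<And>x. \<exists>c. x - emb c \<in> M"
  shows "\<exists>\<chi>. character \<chi> \<and> M = {x. \<chi> x = 0}"
proof -
  have Mi: "is_ideal M" using M unfolding is_prime_ideal_def by blast
  define \<chi> where "\<chi> x = (SOME c. x - emb c \<in> M)" for x
  have \<chi>_residue: "x - emb (\<chi> x) \<in> M" for x
    unfolding \<chi>_def using residues by (rule someI_ex)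
  have \<chi>_eqI: "\<chi> x = c" if "x - emb c \<in> M" for x c
  proof (rule ccontr)
    assume "\<chi> x \<noteq> c"
    have "(x - emb c) - (x - emb (\<chi> x)) \<in> M"
      using that \<chi>_residue ideal_diff[OF Mi] by blast
    then have "emb (\<chi> x - c) \<in> M" by simp
    moreover have "\<chi> x - c \<noteq> 0" using \<open>\<chi> x \<noteq> c\<close> by simp
    ultimately show False using emb_notin_prime_ideal[OF M] by blast
  qed
  have "character \<chi>"
    unfolding character_def
  proof (intro conjI allI)
    fix x y
    have "(x - emb (\<chi> x)) + (y - emb (\<chi> y)) \<in> M"
      using \<chi>_residue ideal_add[OF Mi] by blast
    then show "\<chi> (x + y) = \<chi> x + \<chi> y" by (intro \<chi>_eqI) (simp add: algebra_simps)
    have "(x - emb (\<chi> x)) * y + emb (\<chi> x) * (y - emb (\<chi> y)) \<in> M"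
      using \<chi>_residue ideal_add[OF Mi] ideal_mult_left[OF Mi] ideal_mult_right[OF Mi] by blast
    then show "\<chi> (x * y) = \<chi> x * \<chi> y" by (intro \<chi>_eqI) (simp add: algebra_simps)
  next
    fix c show "\<chi> (emb c) = c" by (intro \<chi>_eqI) (simp add: ideal_0[OF Mi])
  qed
  moreover have "M = {x. \<chi> x = 0}"
  proof safe
    fix x assume "x \<in> M"
    then show "\<chi> x = 0" by (intro \<chi>_eqI) simp
  next
    fix x assume "\<chi> x = 0"
    then show "x \<in> M" using \<chi>_residue[of x] by simp
  qed
  ultimately show ?thesis by blast
qed

definition eval_poly :: "'a \<Rightarrow> complex poly \<Rightarrow> 'a" where
  "eval_poly t q = poly (map_poly emb q) t"

lemma eval_poly_mult: "eval_poly t (p * q) = eval_poly t p * eval_poly t q"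
  unfolding eval_poly_def by (simp add: map_poly_mult)

lemma eval_poly_sum: "eval_poly t (sum f A) = (\<Sum>a\<in>A. eval_poly t (f a))"
  unfolding eval_poly_def
  by (induction A rule: infinite_finite_induct) (auto simp: map_poly_add)

lemma eval_poly_1: "eval_poly t 1 = 1"
  unfolding eval_poly_def by simp

lemma eval_poly_prod: "eval_poly t (prod f A) = (\<Prod>a\<in>A. eval_poly t (f a))"
  by (induction A rule: infinite_finite_induct) (simp_all add: eval_poly_mult eval_poly_1)

lemma eval_poly_smult: "eval_poly t (smult a p) = emb a * eval_poly t p"
  unfolding eval_poly_def by (simp add: map_poly_smult)

lemma eval_poly_linear: "eval_poly t [:- c, 1:] = t - emb c"
  unfolding eval_poly_def by (simp add: map_poly_pCons)

lemma eval_poly_notin_prime_ideal: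
  assumes M: "is_prime_ideal M" and t: "\<And>c. t - emb c \<notin> M" and "q \<noteq> 0"
  shows "eval_poly t q \<notin> M"
proof -
  obtain root where q: "smult (lead_coeff q) (\<Prod>i<degree q. [:- root i, 1:]) = q"
    by (rule complex_poly_decompose')
  have "eval_poly t (smult (lead_coeff q) (\<Prod>i<degree q. [:- root i, 1:]))
      = emb (lead_coeff q) * (\<Prod>i<degree q. t - emb (root i))"
    by (simp add: eval_poly_smult eval_poly_prod eval_poly_linear)
  then have eq: "eval_poly t q = emb (lead_coeff q) * (\<Prod>i<degree q. t - emb (root i))"
    unfolding q .
  have "emb (lead_coeff q) \<notin> M" using emb_notin_prime_ideal[OF M] \<open>q \<noteq> 0\<close> by simp
  moreover have "(\<Prod>i<degree q. t - emb (root i)) \<notin> M"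
    by (rule prime_ideal_prod_notin[OF M]) (rule t)
  moreover have "a * b \<notin> M" if "a \<notin> M" "b \<notin> M" for a b
    using M that unfolding is_prime_ideal_def by blast
  ultimately show ?thesis unfolding eq by blast
qed

text \<open>Modulo \<open>M\<close>, \<open>y c\<close> is \<open>s / (t - c)\<close>; multiplying a linear relation among these fractions by
  \<open>\<Prod>c\<in>C. t - c\<close> turns it into a polynomial in \<open>t\<close> that must vanish.\<close>

lemma fractions_independent_modulo_prime:
  assumes M: "is_prime_ideal M" and t: "\<And>c. t - emb c \<notin> M" and s: "s \<notin> M"
    and C: "finite C" and y: "\<And>c. c \<in> C \<Longrightarrow> (t - emb c) * y c - s \<in> M"
    and relation: "(\<Sum>c\<in>C. emb (a c) * y c) \<in> M"
  shows "\<forall>c\<in>C. a c = 0"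
proof -
  have Mi: "is_ideal M" using M unfolding is_prime_ideal_def by blast
  define pc where "pc c = (\<Prod>c'\<in>C - {c}. [:- c', 1:])" for c
  define p where "p = (\<Sum>c\<in>C. smult (a c) (pc c))"
  define Pc where "Pc c = (\<Prod>c'\<in>C - {c}. t - emb c')" for c
  have Pc: "eval_poly t (pc c) = Pc c" for c
    unfolding pc_def Pc_def by (simp add: eval_poly_prod eval_poly_linear)
  have T: "(\<Prod>c\<in>C. t - emb c) = (t - emb c) * Pc c" if "c \<in> C" for c
    unfolding Pc_def using C that by (simp add: prod.remove)
  have eq: "(\<Sum>c\<in>C. emb (a c) * y c) * (\<Prod>c\<in>C. t - emb c)
      - (\<Sum>c\<in>C. (emb (a c) * Pc c) * ((t - emb c) * y c - s)) = s * eval_poly t p"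
    unfolding p_def eval_poly_sum sum_distrib_right sum_distrib_left sum_subtractf[symmetric]
    by (rule sum.cong) (simp_all add: T eval_poly_smult Pc algebra_simps)
  have cleared: "(\<Sum>c\<in>C. emb (a c) * y c) * (\<Prod>c\<in>C. t - emb c) \<in> M"
    using relation by (rule ideal_mult_right[OF Mi])
  have remainder: "(\<Sum>c\<in>C. (emb (a c) * Pc c) * ((t - emb c) * y c - s)) \<in> M"
    using y by (intro ideal_sum[OF Mi] ideal_mult_left[OF Mi])
  from ideal_diff[OF Mi cleared remainder] have "s * eval_poly t p \<in> M" unfolding eq .
  then have "eval_poly t p \<in> M" using s M unfolding is_prime_ideal_def by blast
  then have "p = 0" using eval_poly_notin_prime_ideal[OF M t] by blast
  then show ?thesis
    using lagrange_basis_independent[OF C] unfolding p_def pc_def by blast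
qed

lemma module_span_0: "0 \<in> module_span (alg_gen emb X) E"
  unfolding module_span_def using alg_gen_0 by (intro CollectI exI[of _ "\<lambda>_. 0"]) auto

lemma module_span_add:
  assumes "x \<in> module_span (alg_gen emb X) E" "y \<in> module_span (alg_gen emb X) E"
  shows "x + y \<in> module_span (alg_gen emb X) E"
proof -
  obtain b1 b2 where "\<forall>e\<in>E. b1 e \<in> alg_gen emb X" "x = (\<Sum>e\<in>E. b1 e * e)"
    "\<forall>e\<in>E. b2 e \<in> alg_gen emb X" "y = (\<Sum>e\<in>E. b2 e * e)"
    using assms unfolding module_span_def by blast
  then show ?thesis unfolding module_span_def
    by (intro CollectI exI[of _ "\<lambda>e. b1 e + b2 e"])
      (auto simp: sum.distrib distrib_right intro: alg_gen_add)
qed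

lemma module_span_mult:
  assumes "r \<in> alg_gen emb X" "x \<in> module_span (alg_gen emb X) E"
  shows "r * x \<in> module_span (alg_gen emb X) E"
proof -
  obtain b where "\<forall>e\<in>E. b e \<in> alg_gen emb X" "x = (\<Sum>e\<in>E. b e * e)"
    using assms(2) unfolding module_span_def by blast
  then show ?thesis unfolding module_span_def using assms(1)
    by (intro CollectI exI[of _ "\<lambda>e. r * b e"])
      (auto simp: sum_distrib_left ac_simps intro: alg_gen_mult)
qed

lemma module_span_sum:
  "(\<And>i. i \<in> I \<Longrightarrow> f i \<in> module_span (alg_gen emb X) E) \<Longrightarrow> sum f I \<in> module_span (alg_gen emb X) E"
  by (induction I rule: infinite_finite_induct) (auto intro: module_span_0 module_span_add)

lemma span_subset_module_span:
  assumes "finite E"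
  shows "vs.span E \<subseteq> module_span (alg_gen emb X) E"
proof
  fix x assume "x \<in> vs.span E"
  then obtain u where "x = (\<Sum>e\<in>E. emb (u e) * e)" using vs.span_finite[OF assms] by blast
  then show "x \<in> module_span (alg_gen emb X) E"
    unfolding module_span_def using alg_gen_emb by (intro CollectI exI[of _ "\<lambda>e. emb (u e)"]) auto
qed

context
  fixes X I assumes I: "is_ideal_in (alg_gen emb X) I"
begin

lemma ideal_in_subset: "x \<in> I \<Longrightarrow> x \<in> alg_gen emb X"
  and ideal_in_0: "0 \<in> I"
  and ideal_in_add: "x \<in> I \<Longrightarrow> y \<in> I \<Longrightarrow> x + y \<in> I"
  and ideal_in_mult: "x \<in> I \<Longrightarrow> r \<in> alg_gen emb X \<Longrightarrow> r * x \<in> I"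
  using I unfolding is_ideal_in_def by blast+

lemma ideal_in_diff:
  assumes "x \<in> I" "y \<in> I"
  shows "x - y \<in> I"
proof -
  have "x + emb (- 1) * y \<in> I" using assms by (intro ideal_in_add ideal_in_mult alg_gen_emb)
  then show ?thesis by simp
qed

lemma ideal_in_sum: "(\<And>i. i \<in> A \<Longrightarrow> f i \<in> I) \<Longrightarrow> sum f A \<in> I"
  by (induction A rule: infinite_finite_induct) (auto intro: ideal_in_0 ideal_in_add)

lemma ideal_in_mult_congruent_one:
  assumes "a \<in> alg_gen emb X" "a - 1 \<in> I" "b - 1 \<in> I"
  shows "a * b - 1 \<in> I"
proof -
  have "a * (b - 1) + (a - 1) \<in> I" using assms by (intro ideal_in_add ideal_in_mult)
  then show ?thesis by (simp add: algebra_simps)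
qed

end

text \<open>One step of the determinant trick: the generator \<open>e0\<close> is eliminated from the relations
  by multiplying them with \<open>w = u - b e0 e0\<close>.\<close>

lemma nakayama_step:
  assumes I: "is_ideal_in (alg_gen emb X) I" and Q: "is_ideal Q"
    and u: "u \<in> alg_gen emb X" "u - 1 \<in> I"
    and b: "\<forall>e\<in>insert e0 E. \<forall>e'\<in>insert e0 E. b e e' \<in> I"
    and rel: "\<forall>e\<in>insert e0 E. u * e - (\<Sum>e'\<in>insert e0 E. b e e' * e') \<in> Q"
    and E: "finite E" "e0 \<notin> E"
  defines "w \<equiv> u - b e0 e0"
  shows "w \<in> alg_gen emb X" "w - 1 \<in> I" "w * e0 - (\<Sum>e'\<in>E. b e0 e' * e') \<in> Q"
    and "\<forall>e\<in>E. \<exists>b'. (\<forall>e'\<in>E. b' e' \<in> I) \<and> (w * u) * e - (\<Sum>e'\<in>E. b' e' * e') \<in> Q"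
proof -
  have b0: "b e0 e0 \<in> I" using b by blast
  show w: "w \<in> alg_gen emb X" unfolding w_def using u(1) ideal_in_subset[OF I b0] by (rule alg_gen_diff)
  have "(u - 1) - b e0 e0 \<in> I" using ideal_in_diff[OF I u(2) b0] .
  then show "w - 1 \<in> I" unfolding w_def by (simp add: algebra_simps)
  have split: "(\<Sum>e'\<in>insert e0 E. b e e' * e') = b e e0 * e0 + (\<Sum>e'\<in>E. b e e' * e')" for e
    using E by simp
  define R where "R e = (\<Sum>e'\<in>E. b e e' * e')" for e
  have e0: "w * e0 - R e0 \<in> Q"
    using rel unfolding split w_def R_def by (simp add: algebra_simps)
  then show "w * e0 - (\<Sum>e'\<in>E. b e0 e' * e') \<in> Q" unfolding R_def .
  show "\<forall>e\<in>E. \<exists>b'. (\<forall>e'\<in>E. b' e' \<in> I) \<and> (w * u) * e - (\<Sum>e'\<in>E. b' e' * e') \<in> Q"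
  proof
    fix e assume "e \<in> E"
    have "u * e - b e e0 * e0 - R e \<in> Q"
      using rel \<open>e \<in> E\<close> unfolding split R_def by (simp add: diff_diff_eq)
    then have "w * (u * e - b e e0 * e0 - R e) + b e e0 * (w * e0 - R e0) \<in> Q"
      using e0 by (intro ideal_add[OF Q] ideal_mult_left[OF Q])
    moreover have "(\<Sum>e'\<in>E. (w * b e e' + b e e0 * b e0 e') * e') = w * R e + b e e0 * R e0"
      unfolding R_def sum_distrib_left sum.distrib[symmetric]
      by (rule sum.cong) (simp_all add: algebra_simps)
    ultimately have "(w * u) * e - (\<Sum>e'\<in>E. (w * b e e' + b e e0 * b e0 e') * e') \<in> Q"
      by (simp add: algebra_simps)
    moreover have "\<forall>e'\<in>E. w * b e e' + b e e0 * b e0 e' \<in> I"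
      using b \<open>e \<in> E\<close> w ideal_in_subset[OF I]
      by (auto intro!: ideal_in_add[OF I] ideal_in_mult[OF I])
    ultimately show "\<exists>b'. (\<forall>e'\<in>E. b' e' \<in> I) \<and> (w * u) * e - (\<Sum>e'\<in>E. b' e' * e') \<in> Q"
      by (intro exI[of _ "\<lambda>e'. w * b e e' + b e e0 * b e0 e'"]) simp
  qed
qed

lemma nakayama:
  assumes I: "is_ideal_in (alg_gen emb X) I" and Q: "is_ideal Q" and "finite E"
    and "u \<in> alg_gen emb X" "u - 1 \<in> I"
    and "\<forall>e\<in>E. \<exists>b. (\<forall>e'\<in>E. b e' \<in> I) \<and> u * e - (\<Sum>e'\<in>E. b e' * e') \<in> Q"
  shows "\<exists>c\<in>alg_gen emb X. c - 1 \<in> I \<and> (\<forall>e\<in>E. c * e \<in> Q)"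
  using assms(3-)
proof (induction E arbitrary: u rule: finite_induct)
  case empty
  then show ?case using alg_gen_1 ideal_in_0[OF I] by (intro bexI[of _ 1]) auto
next
  case (insert e0 E)
  from bchoice[OF insert.prems(3)] obtain b where
    "\<forall>e\<in>insert e0 E. (\<forall>e'\<in>insert e0 E. b e e' \<in> I) \<and> u * e - (\<Sum>e'\<in>insert e0 E. b e e' * e') \<in> Q"
    by blast
  then have b: "\<forall>e\<in>insert e0 E. \<forall>e'\<in>insert e0 E. b e e' \<in> I"
    and rel: "\<forall>e\<in>insert e0 E. u * e - (\<Sum>e'\<in>insert e0 E. b e e' * e') \<in> Q"
    by blast+
  define w where "w = u - b e0 e0"
  note step = nakayama_step[OF I Q insert.prems(1,2) b rel insert.hyps(1,2), folded w_def]
  obtain c where c: "c \<in> alg_gen emb X" "c - 1 \<in> I" "\<forall>e\<in>E. c * e \<in> Q"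
    using insert.IH[OF alg_gen_mult[OF step(1) insert.prems(1)]
        ideal_in_mult_congruent_one[OF I step(1,2) insert.prems(2)] step(4)] by blast
  have "c * w * e \<in> Q" if "e \<in> insert e0 E" for e
    using that
  proof
    assume "e = e0"
    have "(\<Sum>e'\<in>E. b e0 e' * (c * e')) \<in> Q"
      by (rule ideal_sum[OF Q], rule ideal_mult_left[OF Q]) (use c(3) in blast)
    with ideal_mult_left[OF Q step(3)]
    have "c * (w * e0 - (\<Sum>e'\<in>E. b e0 e' * e')) + (\<Sum>e'\<in>E. b e0 e' * (c * e')) \<in> Q"
      by (rule ideal_add[OF Q])
    then show ?thesis
      using \<open>e = e0\<close> by (simp add: algebra_simps sum_distrib_left)
  next
    assume "e \<in> E"
    then show ?thesis using ideal_mult_left[OF Q, of "c * e" w] c(3) by (simp add: ac_simps)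
  qed
  then show ?case
    using alg_gen_mult[OF c(1) step(1)] ideal_in_mult_congruent_one[OF I c(1,2) step(2)] by blast
qed

lemma character_kernel_ideal_in:
  assumes "character \<chi>"
  shows "is_ideal_in (alg_gen emb X) {x \<in> alg_gen emb X. \<chi> x = 0}"
  using assms alg_gen_0 alg_gen_add alg_gen_mult
  unfolding is_ideal_in_def by (auto simp: character_add character_mult)

lemma ideal_combination_mult:
  assumes gen: "\<forall>x. \<exists>b. (\<forall>e\<in>E. b e \<in> alg_gen emb X) \<and> x = (\<Sum>e\<in>E. b e * e)"
    and I: "is_ideal_in (alg_gen emb X) I" and b: "\<forall>e\<in>E. b e \<in> I"
  obtains \<beta> where "\<forall>e\<in>E. \<beta> e \<in> I" "r * (\<Sum>e\<in>E. b e * e) = (\<Sum>e\<in>E. \<beta> e * e)"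
proof -
  have "\<forall>e'. \<exists>a. (\<forall>e\<in>E. a e \<in> alg_gen emb X) \<and> r * e' = (\<Sum>e\<in>E. a e * e)"
    using gen by blast
  then obtain \<alpha> where "\<And>e'. (\<forall>e\<in>E. \<alpha> e' e \<in> alg_gen emb X) \<and> r * e' = (\<Sum>e\<in>E. \<alpha> e' e * e)"
    by metis
  then have \<alpha>: "\<And>e'. \<forall>e\<in>E. \<alpha> e' e \<in> alg_gen emb X" "\<And>e'. r * e' = (\<Sum>e\<in>E. \<alpha> e' e * e)"
    by blast+
  define \<beta> where "\<beta> e = (\<Sum>e'\<in>E. \<alpha> e' e * b e')" for e
  have \<beta>_in: "\<forall>e\<in>E. \<beta> e \<in> I"
    unfolding \<beta>_def using b \<alpha>(1) by (auto intro!: ideal_in_sum[OF I] ideal_in_mult[OF I])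
  have "r * (\<Sum>e\<in>E. b e * e) = (\<Sum>e'\<in>E. b e' * (r * e'))"
    by (simp add: sum_distrib_left ac_simps)
  also have "\<dots> = (\<Sum>e'\<in>E. \<Sum>e\<in>E. \<alpha> e' e * b e' * e)"
    unfolding \<alpha>(2) by (simp add: sum_distrib_left ac_simps)
  also have "\<dots> = (\<Sum>e\<in>E. \<beta> e * e)"
    unfolding \<beta>_def sum_distrib_right by (rule sum.swap)
  finally show ?thesis using \<beta>_in that by blast
qed

text \<open>If \<open>E\<close> generates \<open>S\<close> as a module over the subalgebra, then \<open>I S + Q\<close> consists of the
  elements congruent modulo \<open>Q\<close> to an \<open>I\<close>-combination of \<open>E\<close>.\<close>

lemma is_ideal_extension:
  assumes gen: "\<forall>x. \<exists>b. (\<forall>e\<in>E. b e \<in> alg_gen emb X) \<and> x = (\<Sum>e\<in>E. b e * e)"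
    and I: "is_ideal_in (alg_gen emb X) I" and Q: "is_ideal Q"
  shows "is_ideal {x. \<exists>b. (\<forall>e\<in>E. b e \<in> I) \<and> x - (\<Sum>e\<in>E. b e * e) \<in> Q}"
  unfolding is_ideal_def
proof (intro conjI ballI allI)
  show "0 \<in> {x. \<exists>b. (\<forall>e\<in>E. b e \<in> I) \<and> x - (\<Sum>e\<in>E. b e * e) \<in> Q}"
    using ideal_in_0[OF I] ideal_0[OF Q] by (intro CollectI exI[of _ "\<lambda>_. 0"]) auto
next
  fix x y
  assume "x \<in> {x. \<exists>b. (\<forall>e\<in>E. b e \<in> I) \<and> x - (\<Sum>e\<in>E. b e * e) \<in> Q}"
    and "y \<in> {x. \<exists>b. (\<forall>e\<in>E. b e \<in> I) \<and> x - (\<Sum>e\<in>E. b e * e) \<in> Q}"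
  then obtain b1 b2 where b: "\<forall>e\<in>E. b1 e \<in> I" "x - (\<Sum>e\<in>E. b1 e * e) \<in> Q"
    "\<forall>e\<in>E. b2 e \<in> I" "y - (\<Sum>e\<in>E. b2 e * e) \<in> Q" by blast
  have "(x + y) - (\<Sum>e\<in>E. (b1 e + b2 e) * e)
      = (x - (\<Sum>e\<in>E. b1 e * e)) + (y - (\<Sum>e\<in>E. b2 e * e))"
    by (simp add: sum.distrib algebra_simps)
  also have "\<dots> \<in> Q" using b(2,4) by (rule ideal_add[OF Q])
  finally show "x + y \<in> {x. \<exists>b. (\<forall>e\<in>E. b e \<in> I) \<and> x - (\<Sum>e\<in>E. b e * e) \<in> Q}"
    using b(1,3) ideal_in_add[OF I] by (intro CollectI exI[of _ "\<lambda>e. b1 e + b2 e"]) simp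
next
  fix x r
  assume "x \<in> {x. \<exists>b. (\<forall>e\<in>E. b e \<in> I) \<and> x - (\<Sum>e\<in>E. b e * e) \<in> Q}"
  then obtain b where b: "\<forall>e\<in>E. b e \<in> I" "x - (\<Sum>e\<in>E. b e * e) \<in> Q" by blast
  obtain \<beta> where \<beta>: "\<forall>e\<in>E. \<beta> e \<in> I" "r * (\<Sum>e\<in>E. b e * e) = (\<Sum>e\<in>E. \<beta> e * e)"
    using ideal_combination_mult[OF gen I b(1)] by blast
  then have "r * x - (\<Sum>e\<in>E. \<beta> e * e) = r * (x - (\<Sum>e\<in>E. b e * e))"
    by (simp add: right_diff_distrib)
  with ideal_mult_left[OF Q b(2)] have "r * x - (\<Sum>e\<in>E. \<beta> e * e) \<in> Q" by simp
  with \<beta>(1) show "r * x \<in> {x. \<exists>b. (\<forall>e\<in>E. b e \<in> I) \<and> x - (\<Sum>e\<in>E. b e * e) \<in> Q}"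
    by blast
qed

lemma ideal_gen_subset_extension:
  assumes gen: "\<forall>x. \<exists>b. (\<forall>e\<in>E. b e \<in> alg_gen emb X) \<and> x = (\<Sum>e\<in>E. b e * e)"
    and I: "is_ideal_in (alg_gen emb X) I" and Q: "is_ideal Q"
  shows "ideal_gen (Q \<union> I) \<subseteq> {x. \<exists>b. (\<forall>e\<in>E. b e \<in> I) \<and> x - (\<Sum>e\<in>E. b e * e) \<in> Q}"
proof (rule ideal_gen_least)
  obtain a1 where a1: "\<forall>e\<in>E. a1 e \<in> alg_gen emb X" "1 = (\<Sum>e\<in>E. a1 e * e)"
    using gen by blast
  have "x \<in> {x. \<exists>b. (\<forall>e\<in>E. b e \<in> I) \<and> x - (\<Sum>e\<in>E. b e * e) \<in> Q}" if "x \<in> I" for x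
  proof -
    have "x = x * (\<Sum>e\<in>E. a1 e * e)" unfolding a1(2)[symmetric] by simp
    also have "\<dots> = (\<Sum>e\<in>E. (a1 e * x) * e)" unfolding sum_distrib_left by (simp add: ac_simps)
    finally show ?thesis
      using \<open>x \<in> I\<close> a1(1) ideal_in_mult[OF I] ideal_0[OF Q]
      by (intro CollectI exI[of _ "\<lambda>e. a1 e * x"]) auto
  qed
  moreover have "Q \<subseteq> {x. \<exists>b. (\<forall>e\<in>E. b e \<in> I) \<and> x - (\<Sum>e\<in>E. b e * e) \<in> Q}"
    using ideal_in_0[OF I] by (auto intro!: exI[of _ "\<lambda>_. 0"])
  ultimately show "Q \<union> I \<subseteq> {x. \<exists>b. (\<forall>e\<in>E. b e \<in> I) \<and> x - (\<Sum>e\<in>E. b e * e) \<in> Q}"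
    by blast
qed (rule is_ideal_extension[OF gen I Q])

end

section \<open>Finitely generated algebras: the Nullstellensatz and lying over\<close>

lemma infinite_fiber:
  fixes f :: "complex \<Rightarrow> 'b"
  assumes "countable X" and "\<And>c. f c \<in> X"
  obtains x where "infinite {c. f c = x}"
proof (rule ccontr)
  assume "\<not> thesis"
  with that have "countable (\<Union>x\<in>X. {c. f c = x})" using assms(1) countable_finite by blast
  moreover have "(\<Union>x\<in>X. {c. f c = x}) = UNIV" using assms(2) by blast
  ultimately show False using uncountable_UNIV_complex by simp
qed

locale fg_C_algebra = C_algebra +
  assumes finitely_generated: "\<exists>G. finite G \<and> alg_gen emb G = UNIV"
begin

lemma countable_spanning_set:
  obtains B where "countable B" "\<And>x. \<exists>F. finite F \<and> F \<subseteq> B \<and> x \<in> vs.span F"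
proof -
  obtain G where G: "finite G" "alg_gen emb G = UNIV" using finitely_generated by blast
  define B where "B = prod_list ` lists G"
  have "countable B" unfolding B_def using G(1) by (intro countable_image countable_lists countable_finite)
  moreover have "\<exists>F. finite F \<and> F \<subseteq> B \<and> x \<in> vs.span F" for x
  proof -
    have "x \<in> vs.span B" using alg_gen_subset_span_monomials[of G] G(2) unfolding B_def by blast
    then obtain F where "finite F" "F \<subseteq> B" "x \<in> vs.span F" by (rule in_span_finite_subset)
    then show ?thesis by blast
  qed
  ultimately show ?thesis using that by blast
qed

text \<open>A pigeonhole argument: \<open>S\<close> has countable dimension while \<open>\<complex>\<close> is uncountable.\<close>

lemma family_in_small_span:
  fixes y :: "complex \<Rightarrow> 'a" and k :: "complex \<Rightarrow> nat"
  obtains C F K where "finite C" "finite F" "card C = card F + 1"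
    "\<And>c. c \<in> C \<Longrightarrow> k c = K" "y ` C \<subseteq> vs.span F"
proof -
  obtain B where B: "countable B" "\<And>x. \<exists>F. finite F \<and> F \<subseteq> B \<and> x \<in> vs.span F"
    by (rule countable_spanning_set) blast
  have "\<forall>c. \<exists>F. finite F \<and> F \<subseteq> B \<and> y c \<in> vs.span F" using B(2) by blast
  then obtain F where "\<And>c. finite (F c) \<and> F c \<subseteq> B \<and> y c \<in> vs.span (F c)"
    by metis
  then have F: "\<And>c. finite (F c)" "\<And>c. F c \<subseteq> B" "\<And>c. y c \<in> vs.span (F c)"
    by auto
  have "countable ((UNIV :: nat set) \<times> {F. finite F \<and> F \<subseteq> B})"
    using B(1) by (intro countable_SIGMA countableI_type countable_Collect_finite_subset)
  moreover have "(k c, F c) \<in> UNIV \<times> {F. finite F \<and> F \<subseteq> B}" for c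
    using F by blast
  ultimately obtain KF where "infinite {c. (k c, F c) = KF}"
    by (rule infinite_fiber[where f = "\<lambda>c. (k c, F c)"])
  then obtain K F0 where "infinite {c. k c = K \<and> F c = F0}" by (cases KF) auto
  then obtain C where C: "finite C" "card C = card F0 + 1" "C \<subseteq> {c. k c = K \<and> F c = F0}"
    using infinite_arbitrarily_large by blast
  have "C \<noteq> {}" using C(2) by auto
  then obtain c0 where "c0 \<in> C" by blast
  then have "F c0 = F0" using C(3) by blast
  then have "finite F0" using F(1)[of c0] by simp
  show ?thesis
  proof (rule that[of C F0 K])
    show "k c = K" if "c \<in> C" for c using that C(3) by blast
    show "y ` C \<subseteq> vs.span F0" using C(3) F(3) by blast
  qed (use C \<open>finite F0\<close> in auto)
qed

text \<open>A prime \<open>M\<close> as in \<open>prime_ideal_avoiding_powers\<close> has residue field \<open>\<complex>\<close>: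
  otherwise some \<open>t\<close> is transcendental modulo \<open>M\<close>, and the uncountably many fractions
  \<open>s\<^sup>k / (t - c)\<close> would be independent.\<close>

lemma residues_are_constants:
  assumes M: "is_prime_ideal M" and s: "\<forall>k. s ^ k \<notin> M"
    and inverse: "\<And>x. x \<notin> M \<Longrightarrow> \<exists>y k. x * y - s ^ k \<in> M"
  shows "\<exists>c. x - emb c \<in> M"
proof (rule ccontr)
  assume "\<nexists>c. x - emb c \<in> M"
  then have t: "\<And>c. x - emb c \<notin> M" by blast
  then have "\<forall>c. \<exists>y k. (x - emb c) * y - s ^ k \<in> M" using inverse by blast
  then obtain y k where yk: "\<And>c. (x - emb c) * y c - s ^ (k c) \<in> M" by metis
  obtain C F K where C: "finite C" "finite F" "card C = card F + 1"
    and k: "\<And>c. c \<in> C \<Longrightarrow> k c = K" and span: "y ` C \<subseteq> vs.span F"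
    by (rule family_in_small_span[where y = y and k = k]) blast
  have "card C \<le> card F"
  proof (rule card_independent_family_le[OF C(1,2) span])
    fix a assume "(\<Sum>c\<in>C. emb (a c) * y c) = 0"
    then have relation: "(\<Sum>c\<in>C. emb (a c) * y c) \<in> M"
      using ideal_0[of M] M by (simp add: is_prime_ideal_def)
    have y: "(x - emb c) * y c - s ^ K \<in> M" if "c \<in> C" for c
      using yk[of c] k[OF that] by simp
    have "s ^ K \<notin> M" using s by blast
    from fractions_independent_modulo_prime[OF M t this C(1) y relation]
    show "\<forall>c\<in>C. a c = 0" .
  qed
  with C(3) show False by simp
qed

theorem nullstellensatz:
  assumes "is_ideal I" and "\<forall>k. s ^ k \<notin> I"
  obtains \<chi> where "character \<chi>" "\<forall>x\<in>I. \<chi> x = 0" "\<chi> s \<noteq> 0"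
proof -
  obtain M where M: "is_prime_ideal M" "I \<subseteq> M" "\<forall>k. s ^ k \<notin> M"
    and inverse: "\<And>x. x \<notin> M \<Longrightarrow> \<exists>y k. x * y - s ^ k \<in> M"
    by (rule prime_ideal_avoiding_powers[OF assms]) blast
  obtain \<chi> where \<chi>: "character \<chi>" "M = {x. \<chi> x = 0}"
    using character_of_residues[OF M(1) residues_are_constants[OF M(1) M(3) inverse]] by blast
  show ?thesis
  proof (rule that[OF \<chi>(1)])
    show "\<forall>x\<in>I. \<chi> x = 0" using M(2) \<chi>(2) by blast
    show "\<chi> s \<noteq> 0" using M(3)[rule_format, of 1] \<chi>(2) by simp
  qed
qed

lemma extension_of_character_kernel_proper:
  assumes fin: "finite_over (alg_gen emb X)" and Q: "is_ideal Q" and \<chi>: "character \<chi>"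
    and QX: "\<forall>x\<in>Q \<inter> alg_gen emb X. \<chi> x = 0"
  shows "1 \<notin> ideal_gen (Q \<union> {x \<in> alg_gen emb X. \<chi> x = 0})"
proof
  define P where "P = {x \<in> alg_gen emb X. \<chi> x = 0}"
  have P: "is_ideal_in (alg_gen emb X) P" unfolding P_def using \<chi> by (rule character_kernel_ideal_in)
  assume "1 \<in> ideal_gen (Q \<union> {x \<in> alg_gen emb X. \<chi> x = 0})"
  then have one: "1 \<in> ideal_gen (Q \<union> P)" unfolding P_def .
  obtain E where E: "finite E" and "module_span (alg_gen emb X) E = UNIV"
    using fin unfolding finite_over_def by blast
  then have gen: "\<forall>x. \<exists>b. (\<forall>e\<in>E. b e \<in> alg_gen emb X) \<and> x = (\<Sum>e\<in>E. b e * e)"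
    unfolding module_span_def set_eq_iff by simp
  obtain a1 where a1: "\<forall>e\<in>E. a1 e \<in> alg_gen emb X" "1 = (\<Sum>e\<in>E. a1 e * e)"
    using gen by blast
  note JK = ideal_gen_subset_extension[OF gen P Q]
  have "\<forall>e\<in>E. \<exists>b. (\<forall>e'\<in>E. b e' \<in> P) \<and> 1 * e - (\<Sum>e'\<in>E. b e' * e') \<in> Q"
  proof
    fix e
    have "e * 1 \<in> ideal_gen (Q \<union> P)" using ideal_mult_left[OF is_ideal_ideal_gen one] .
    then show "\<exists>b. (\<forall>e'\<in>E. b e' \<in> P) \<and> 1 * e - (\<Sum>e'\<in>E. b e' * e') \<in> Q"
      using JK by auto
  qed
  moreover have "1 - 1 \<in> P" using ideal_in_0[OF P] by simp
  ultimately obtain c where c: "c \<in> alg_gen emb X" "c - 1 \<in> P" "\<forall>e\<in>E. c * e \<in> Q"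
    using nakayama[OF P Q E alg_gen_1] by blast
  have "c = (\<Sum>e\<in>E. a1 e * (c * e))"
    unfolding sum_distrib_left[symmetric] mult.left_commute[of _ c] a1(2)[symmetric] by simp
  also have "\<dots> \<in> Q" by (rule ideal_sum[OF Q], rule ideal_mult_left[OF Q]) (use c(3) in blast)
  finally have "\<chi> c = 0" using QX c(1) by blast
  moreover have "\<chi> (c - 1) = 0" using c(2) unfolding P_def by blast
  ultimately show False using character_diff[OF \<chi>] \<chi> by simp
qed

lemma lying_over_character:
  assumes fin: "finite_over (alg_gen emb X)" and Q: "is_ideal Q" and \<chi>: "character \<chi>"
    and QX: "\<forall>x\<in>Q \<inter> alg_gen emb X. \<chi> x = 0"
  obtains \<chi>' where "character \<chi>'" "\<forall>x\<in>Q. \<chi>' x = 0" "\<forall>x\<in>alg_gen emb X. \<chi>' x = \<chi> x"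
proof -
  define J where "J = ideal_gen (Q \<union> {x \<in> alg_gen emb X. \<chi> x = 0})"
  have "\<forall>k. 1 ^ k \<notin> J"
    using extension_of_character_kernel_proper[OF assms] unfolding J_def by simp
  then obtain \<chi>' where \<chi>': "character \<chi>'" "\<forall>x\<in>J. \<chi>' x = 0"
    using nullstellensatz[OF is_ideal_ideal_gen] unfolding J_def by blast
  have J: "Q \<union> {x \<in> alg_gen emb X. \<chi> x = 0} \<subseteq> J" unfolding J_def by (rule ideal_gen_superset)
  show ?thesis
  proof (rule that[OF \<chi>'(1)])
    show "\<forall>x\<in>Q. \<chi>' x = 0" using \<chi>'(2) J by blast
    show "\<forall>x\<in>alg_gen emb X. \<chi>' x = \<chi> x"
    proof
      fix x assume "x \<in> alg_gen emb X"
      then have "x - emb (\<chi> x) \<in> alg_gen emb X" using alg_gen_emb by (rule alg_gen_diff)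
      moreover have "\<chi> (x - emb (\<chi> x)) = 0" using \<chi> by (simp add: character_diff)
      ultimately have "\<chi>' (x - emb (\<chi> x)) = 0" using J \<chi>'(2) by blast
      then show "\<chi>' x = \<chi> x" using \<chi>'(1) by (simp add: character_diff)
    qed
  qed
qed

end

section \<open>Graded algebras\<close>

text \<open>Monomials in homogeneous generators are lists of pairs \<open>(degree, generator)\<close>.\<close>

definition weighted_prod :: "(nat \<times> 'a::comm_ring_1) list \<Rightarrow> 'a" where
  "weighted_prod l = prod_list (map snd l)"

definition weight :: "(nat \<times> 'a) list \<Rightarrow> nat" where
  "weight l = sum_list (map fst l)"

lemma weighted_prod_Cons [simp]: "weighted_prod (p # l) = snd p * weighted_prod l"
  and weighted_prod_Nil [simp]: "weighted_prod [] = 1"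
  by (simp_all add: weighted_prod_def)

lemma weight_Cons [simp]: "weight (p # l) = fst p + weight l"
  and weight_Nil [simp]: "weight [] = 0"
  by (simp_all add: weight_def)

lemma weighted_prod_extract_power:
  "count_list l p \<ge> k \<Longrightarrow> \<exists>l'. set l' \<subseteq> set l \<and> weighted_prod l = snd p ^ k * weighted_prod l'
     \<and> weight l = k * fst p + weight l'"
proof (induction l arbitrary: k)
  case (Cons q l)
  show ?case
  proof (cases "k > 0 \<and> q = p")
    case True
    then obtain k' where k: "k = Suc k'" by (metis gr0_conv_Suc)
    with True Cons(2) have "count_list l p \<ge> k'" by simp
    then obtain l' where "set l' \<subseteq> set l" "weighted_prod l = snd p ^ k' * weighted_prod l'"
      "weight l = k' * fst p + weight l'" using Cons(1) by blast
    then show ?thesis using True k by (intro exI[of _ l']) auto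
  next
    case False
    show ?thesis
    proof (cases "k = 0")
      case True
      then show ?thesis by (intro exI[of _ "q # l"]) auto
    next
      case False
      with \<open>\<not> (k > 0 \<and> q = p)\<close> have "count_list l p \<ge> k" using Cons(2) by auto
      then obtain l' where "set l' \<subseteq> set l" "weighted_prod l = snd p ^ k * weighted_prod l'"
        "weight l = k * fst p + weight l'" using Cons(1) by blast
      then show ?thesis by (intro exI[of _ "q # l'"]) (auto simp: ac_simps)
    qed
  qed
qed simp

lemma weight_le_Max_length:
  assumes "set l \<subseteq> H" "finite H"
  shows "weight l \<le> Max (insert 1 (fst ` H)) * length l"
  using assms(1)
proof (induction l)
  case (Cons p l)
  have "fst p \<le> Max (insert 1 (fst ` H))" using Cons(2) assms(2) by simp
  then show ?case using Cons by simp
qed simp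

lemma long_list_frequent_element:
  assumes "set l \<subseteq> H" "finite H" "length l > card H * N"
  obtains p where "p \<in> H" "count_list l p \<ge> N"
proof (rule ccontr)
  assume "\<not> thesis"
  with that have "count_list l p \<le> N" if "p \<in> H" for p using that by fastforce
  then have "sum (count_list l) H \<le> card H * N" using sum_mono[of H "count_list l" "\<lambda>_. N"] by simp
  with sum_count_set[OF assms(1,2)] assms(3) show False by simp
qed

locale graded_C_algebra =
  fixes emb :: "complex \<Rightarrow> 'a::comm_ring_1" and Sd :: "nat \<Rightarrow> 'a set"
  assumes fg_graded: "fg_graded_C_algebra emb Sd"
begin

sublocale fg_C_algebra emb
  using fg_graded unfolding fg_graded_C_algebra_def by unfold_locales blast+

lemma emb_inj: "inj emb"
  and Sd_subspace: "C_subspace emb (Sd d)"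
  and Sd_mult: "x \<in> Sd d \<Longrightarrow> y \<in> Sd e \<Longrightarrow> x * y \<in> Sd (d + e)"
  and hom_decomp_exists: "\<exists>f. hom_decomp Sd f \<and> x = hsum f"
  and hom_decomp_unique: "hom_decomp Sd f \<Longrightarrow> hsum f = 0 \<Longrightarrow> f d = 0"
  and Sd_0_eq: "Sd 0 = range emb"
  using fg_graded unfolding fg_graded_C_algebra_def by blast+

lemma Sd_zero: "0 \<in> Sd d"
  and Sd_add: "x \<in> Sd d \<Longrightarrow> y \<in> Sd d \<Longrightarrow> x + y \<in> Sd d"
  and Sd_smult: "x \<in> Sd d \<Longrightarrow> emb c * x \<in> Sd d"
  using Sd_subspace[of d] unfolding C_subspace_def by auto

lemma Sd_diff: "x \<in> Sd d \<Longrightarrow> y \<in> Sd d \<Longrightarrow> x - y \<in> Sd d"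
  using Sd_add[of x d "emb (- 1) * y"] Sd_smult[of y d "- 1"] by simp

lemma Sd_sum: "(\<And>i. i \<in> I \<Longrightarrow> f i \<in> Sd d) \<Longrightarrow> sum f I \<in> Sd d"
  by (induction I rule: infinite_finite_induct) (auto intro: Sd_zero Sd_add)

lemma one_in_Sd_0: "1 \<in> Sd 0"
  using Sd_0_eq emb_1 by (metis rangeI)

lemma Sd_power: "x \<in> Sd e \<Longrightarrow> x ^ n \<in> Sd (n * e)"
  by (induction n) (auto simp: one_in_Sd_0 dest: Sd_mult)

lemma weighted_prod_in_Sd: "(\<And>p. p \<in> set l \<Longrightarrow> snd p \<in> Sd (fst p)) \<Longrightarrow> weighted_prod l \<in> Sd (weight l)"
  by (induction l) (auto simp: one_in_Sd_0 intro: Sd_mult)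

text \<open>The decomposition \<open>x = (\<Sum>d. x\<^sub>d)\<close> is encoded as the polynomial \<open>\<Sum>d. x\<^sub>d t\<^sup>d\<close> over \<open>S\<close>:
  evaluating at \<open>t = 1\<close> recovers \<open>x\<close>, and \<open>x \<mapsto> \<Sum>d. x\<^sub>d t\<^sup>d\<close> is a ring homomorphism.\<close>

definition homogeneous_coeffs :: "'a poly \<Rightarrow> bool" where
  "homogeneous_coeffs p \<longleftrightarrow> (\<forall>d. coeff p d \<in> Sd d)"

definition components :: "'a \<Rightarrow> 'a poly" where
  "components x = (THE p. homogeneous_coeffs p \<and> poly p 1 = x)"

definition hcomp :: "nat \<Rightarrow> 'a \<Rightarrow> 'a" where
  "hcomp d x = coeff (components x) d"

lemma homogeneous_coeffs_add: "homogeneous_coeffs p \<Longrightarrow> homogeneous_coeffs q \<Longrightarrow> homogeneous_coeffs (p + q)"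
  and homogeneous_coeffs_diff: "homogeneous_coeffs p \<Longrightarrow> homogeneous_coeffs q \<Longrightarrow> homogeneous_coeffs (p - q)"
  and homogeneous_coeffs_smult: "homogeneous_coeffs p \<Longrightarrow> homogeneous_coeffs (smult (emb c) p)"
  by (auto simp: homogeneous_coeffs_def Sd_add Sd_diff Sd_smult)

lemma homogeneous_coeffs_mult:
  assumes "homogeneous_coeffs p" "homogeneous_coeffs q"
  shows "homogeneous_coeffs (p * q)"
  unfolding homogeneous_coeffs_def coeff_mult
proof
  fix d
  have "coeff p i * coeff q (d - i) \<in> Sd d" if "i \<le> d" for i
    using assms Sd_mult[of "coeff p i" i "coeff q (d - i)" "d - i"] that
    unfolding homogeneous_coeffs_def by simp
  then show "(\<Sum>i\<le>d. coeff p i * coeff q (d - i)) \<in> Sd d" by (auto intro: Sd_sum)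
qed

lemma poly_at_1: "poly (p :: 'a poly) 1 = (\<Sum>i\<le>degree p. coeff p i)"
  by (simp add: poly_altdef)

lemma hom_decomp_coeff:
  assumes "homogeneous_coeffs p"
  shows "hom_decomp Sd (coeff p)" "hsum (coeff p) = poly p 1"
proof -
  have sub: "{d. coeff p d \<noteq> 0} \<subseteq> {..degree p}" by (auto intro: le_degree)
  then show "hom_decomp Sd (coeff p)"
    using assms finite_subset by (auto simp: hom_decomp_def finsupp_def homogeneous_coeffs_def)
  show "hsum (coeff p) = poly p 1"
    unfolding hsum_def poly_at_1 using sub by (intro sum.mono_neutral_left) auto
qed

lemma hom_decomp_poly:
  assumes "hom_decomp Sd f"
  obtains p where "coeff p = f" "homogeneous_coeffs p" "poly p 1 = hsum f"
proof
  have "\<forall>\<^sub>\<infinity> n. f n = 0"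
    using assms by (simp add: hom_decomp_def finsupp_def MOST_iff_cofinite)
  then show f: "coeff (Abs_poly f) = f" by (simp add: Abs_poly_inverse)
  then show "homogeneous_coeffs (Abs_poly f)"
    using assms by (simp add: homogeneous_coeffs_def hom_decomp_def)
  then show "poly (Abs_poly f) 1 = hsum f" using hom_decomp_coeff f by metis
qed

lemma homogeneous_coeffs_unique:
  assumes "homogeneous_coeffs p" "homogeneous_coeffs q" "poly p 1 = poly q 1"
  shows "p = q"
proof -
  have pq: "homogeneous_coeffs (p - q)" using assms homogeneous_coeffs_diff by blast
  have "hsum (coeff (p - q)) = 0" using hom_decomp_coeff(2)[OF pq] assms(3) by simp
  then have "coeff (p - q) d = 0" for d by (rule hom_decomp_unique[OF hom_decomp_coeff(1)[OF pq]])
  then show ?thesis by (simp add: poly_eq_iff)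
qed

lemma components: "homogeneous_coeffs (components x)" "poly (components x) 1 = x"
proof -
  obtain f where "hom_decomp Sd f" "x = hsum f" using hom_decomp_exists by blast
  then have "\<exists>!p. homogeneous_coeffs p \<and> poly p 1 = x"
    using hom_decomp_poly homogeneous_coeffs_unique by metis
  then have "homogeneous_coeffs (components x) \<and> poly (components x) 1 = x"
    unfolding components_def by (rule theI')
  then show "homogeneous_coeffs (components x)" "poly (components x) 1 = x" by auto
qed

lemma components_eqI: "homogeneous_coeffs p \<Longrightarrow> poly p 1 = x \<Longrightarrow> components x = p"
  using components homogeneous_coeffs_unique by blast

lemma components_add [simp]: "components (x + y) = components x + components y"
  and components_diff [simp]: "components (x - y) = components x - components y"
  and components_mult [simp]: "components (x * y) = components x * components y"
  and components_smult: "components (emb c * x) = smult (emb c) (components x)"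
  by (rule components_eqI;
      simp add: components homogeneous_coeffs_add homogeneous_coeffs_diff
        homogeneous_coeffs_mult homogeneous_coeffs_smult)+

lemma components_homogeneous: "x \<in> Sd e \<Longrightarrow> components x = monom x e"
  by (rule components_eqI) (auto simp: homogeneous_coeffs_def Sd_zero poly_monom)

lemma components_0 [simp]: "components 0 = 0"
  using components_homogeneous[OF Sd_zero[of 0]] by simp

lemma components_sum: "components (sum f I) = (\<Sum>i\<in>I. components (f i))"
  by (induction I rule: infinite_finite_induct) auto

lemma hcomp_in_Sd: "hcomp d x \<in> Sd d"
  using components(1) by (simp add: hcomp_def homogeneous_coeffs_def)

lemma sum_hcomp: "x = (\<Sum>d\<le>degree (components x). hcomp d x)"
  using components(2)[of x] by (simp add: poly_at_1 hcomp_def)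

lemma hcomp_eqI: "hom_decomp Sd f \<Longrightarrow> hsum f = x \<Longrightarrow> hcomp d x = f d"
  by (metis components_eqI hcomp_def hom_decomp_poly)

lemma hcomp_homogeneous: "x \<in> Sd e \<Longrightarrow> hcomp d x = (if d = e then x else 0)"
  by (simp add: hcomp_def components_homogeneous)

lemma hcomp_beyond_degree: "d > degree (components x) \<Longrightarrow> hcomp d x = 0"
  by (simp add: hcomp_def coeff_eq_0)

lemma hcomp_add: "hcomp d (x + y) = hcomp d x + hcomp d y"
  and hcomp_diff: "hcomp d (x - y) = hcomp d x - hcomp d y"
  and hcomp_mult: "hcomp d (x * y) = (\<Sum>i\<le>d. hcomp i x * hcomp (d - i) y)"
  and hcomp_sum: "hcomp d (sum f I) = (\<Sum>i\<in>I. hcomp d (f i))"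
  by (simp_all add: hcomp_def coeff_mult components_sum coeff_sum)

lemma hcomp_smult: "hcomp d (emb c * x) = emb c * hcomp d x"
  unfolding hcomp_def components_smult by simp

lemma hcomp_emb: "hcomp d (emb c) = (if d = 0 then emb c else 0)"
  using hcomp_homogeneous[of "emb c" 0] Sd_0_eq by simp

lemma hcomp_uminus: "hcomp d (- x) = - hcomp d x"
  using hcomp_diff[of d 0 x] hcomp_emb[of d 0] by simp

lemma hcomp_hcomp: "hcomp e (hcomp d x) = (if e = d then hcomp d x else 0)"
  using hcomp_homogeneous[OF hcomp_in_Sd] by simp

lemma hcomp_0_in_range: "\<exists>c. hcomp 0 x = emb c"
  using hcomp_in_Sd[of 0 x] Sd_0_eq by auto

lemma irrelevant_ideal_eq: "irrelevant_ideal Sd = {x. hcomp 0 x = 0}"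
proof safe
  fix x assume "x \<in> irrelevant_ideal Sd"
  then obtain f where "hom_decomp Sd f" "f 0 = 0" "x = hsum f"
    unfolding irrelevant_ideal_def by blast
  then show "hcomp 0 x = 0" using hcomp_eqI by metis
next
  fix x assume "hcomp 0 x = 0"
  then show "x \<in> irrelevant_ideal Sd"
    unfolding irrelevant_ideal_def using hom_decomp_coeff[OF components(1)] components(2)[of x]
    by (intro CollectI exI[of _ "coeff (components x)"]) (auto simp: hcomp_def)
qed

lemma homogeneous_ideal_iff: "homogeneous_ideal Sd I \<longleftrightarrow> (\<forall>x\<in>I. \<forall>d. hcomp d x \<in> I)"
proof
  assume "homogeneous_ideal Sd I"
  then show "\<forall>x\<in>I. \<forall>d. hcomp d x \<in> I"
    using hom_decomp_coeff[OF components(1)] components(2)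
    unfolding homogeneous_ideal_def hcomp_def by metis
next
  assume "\<forall>x\<in>I. \<forall>d. hcomp d x \<in> I"
  then show "homogeneous_ideal Sd I"
    unfolding homogeneous_ideal_def using hcomp_eqI by metis
qed

lemma in_alg_gen_positive_hcomps:
  "x \<in> alg_gen emb {hcomp d x | d. d \<in> {1..degree (components x)}}"
proof -
  define N where "N = degree (components x)"
  have "x = (\<Sum>d\<le>N. hcomp d x)" unfolding N_def by (rule sum_hcomp)
  also have "{..N} = insert 0 {1..N}" by auto
  finally have x: "x = hcomp 0 x + (\<Sum>d\<in>{1..N}. hcomp d x)" by simp
  obtain c where "hcomp 0 x = emb c" using hcomp_0_in_range by blast
  then have "hcomp 0 x \<in> alg_gen emb {hcomp d x | d. d \<in> {1..N}}" using alg_gen_emb by simp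
  moreover have "(\<Sum>d\<in>{1..N}. hcomp d x) \<in> alg_gen emb {hcomp d x | d. d \<in> {1..N}}"
    by (intro alg_gen_sum alg_gen_base) blast
  ultimately show ?thesis unfolding N_def[symmetric] by (subst x) (rule alg_gen_add)
qed

lemma homogeneous_generators:
  obtains H where "finite H" "\<And>p. p \<in> H \<Longrightarrow> fst p \<ge> 1 \<and> snd p \<in> Sd (fst p)"
    "\<And>d x. x \<in> Sd d \<Longrightarrow> x \<in> vs.span (weighted_prod ` {l \<in> lists H. weight l = d})"
proof -
  obtain G where G: "finite G" "alg_gen emb G = UNIV" using finitely_generated by blast
  define H where "H = (\<Union>g\<in>G. (\<lambda>d. (d, hcomp d g)) ` {1..degree (components g)})"
  have "finite H" unfolding H_def using G(1) by auto
  moreover have H: "fst p \<ge> 1 \<and> snd p \<in> Sd (fst p)" if "p \<in> H" for p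
    using that unfolding H_def by (auto simp: hcomp_in_Sd)
  moreover have "x \<in> vs.span (weighted_prod ` {l \<in> lists H. weight l = d})" if "x \<in> Sd d" for d x
  proof -
    have "g \<in> alg_gen emb (snd ` H)" if "g \<in> G" for g
    proof -
      have "hcomp d g \<in> snd ` H" if "d \<in> {1..degree (components g)}" for d
      proof -
        have "(d, hcomp d g) \<in> H" unfolding H_def using \<open>g \<in> G\<close> that by blast
        then show ?thesis by (rule rev_image_eqI) simp
      qed
      then have "{hcomp d g | d. d \<in> {1..degree (components g)}} \<subseteq> alg_gen emb (snd ` H)"
        using alg_gen_base by blast
      from alg_gen_mono[OF this] show ?thesis using in_alg_gen_positive_hcomps by blast
    qed
    then have "x \<in> alg_gen emb (snd ` H)" using alg_gen_mono[of G "snd ` H"] G(2) by blast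
    then have "x \<in> vs.span (prod_list ` lists (snd ` H))" using alg_gen_subset_span_monomials by blast
    moreover have "prod_list ` lists (snd ` H) = weighted_prod ` lists H"
      unfolding lists_image weighted_prod_def image_image by simp
    ultimately obtain t r where t: "x = (\<Sum>b\<in>t. emb (r b) * b)" "t \<subseteq> weighted_prod ` lists H"
      unfolding vs.span_explicit by auto
    have "x = hcomp d x" using \<open>x \<in> Sd d\<close> by (simp add: hcomp_homogeneous)
    also have "\<dots> = (\<Sum>b\<in>t. emb (r b) * hcomp d b)" unfolding t(1) hcomp_sum hcomp_smult ..
    also have "\<dots> \<in> vs.span (weighted_prod ` {l \<in> lists H. weight l = d})"
    proof (intro vs.span_sum vs.span_scale)
      fix b assume "b \<in> t"
      then obtain l where l: "l \<in> lists H" "b = weighted_prod l" using t(2) by blast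
      then have "b \<in> Sd (weight l)" using H by (auto intro: weighted_prod_in_Sd)
      then show "hcomp d b \<in> vs.span (weighted_prod ` {l \<in> lists H. weight l = d})"
        using l by (auto simp: hcomp_homogeneous intro: vs.span_base vs.span_zero)
    qed
    finally show ?thesis .
  qed
  ultimately show ?thesis using that by blast
qed

lemma Sd_finite_dimensional: "\<exists>F. finite F \<and> Sd d \<subseteq> vs.span F"
proof -
  obtain H where H: "finite H" "\<And>p. p \<in> H \<Longrightarrow> fst p \<ge> 1 \<and> snd p \<in> Sd (fst p)"
    and span: "\<And>d x. x \<in> Sd d \<Longrightarrow> x \<in> vs.span (weighted_prod ` {l \<in> lists H. weight l = d})"
    by (rule homogeneous_generators) blast
  have "length l \<le> weight l" if "set l \<subseteq> H" for l
    using that by (induction l) (auto dest: H(2))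
  then have "{l \<in> lists H. weight l = d} \<subseteq> {l. set l \<subseteq> H \<and> length l \<le> d}" by auto
  then have "finite {l \<in> lists H. weight l = d}"
    using finite_lists_length_le[OF H(1)] by (rule finite_subset)
  then show ?thesis using span by blast
qed

definition vertex :: "'a \<Rightarrow> complex" where
  "vertex x = inv emb (hcomp 0 x)"

lemma emb_vertex: "emb (vertex x) = hcomp 0 x"
  unfolding vertex_def using hcomp_0_in_range[of x] by (metis f_inv_into_f rangeI)

lemma vertex_eq_iff: "vertex x = c \<longleftrightarrow> hcomp 0 x = emb c"
  using emb_vertex[of x] emb_inj by (metis injD)

lemma character_vertex: "character vertex"
  unfolding character_def vertex_eq_iff
  by (simp add: hcomp_add hcomp_mult hcomp_emb emb_vertex)

lemma irrelevant_ideal_in_Spec: "irrelevant_ideal Sd \<in> Spec_pts"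
proof -
  have "irrelevant_ideal Sd = {x. vertex x = 0}"
    unfolding irrelevant_ideal_eq vertex_eq_iff by simp
  then show ?thesis
    unfolding Spec_pts_def using character_kernel_prime[OF character_vertex] by simp
qed

text \<open>For a closed point \<open>\<chi>\<close>, \<open>x\<close> vanishes on the line through \<open>\<chi>\<close> iff
  \<open>\<lambda> \<mapsto> (\<Sum>d. \<chi>(x\<^sub>d) \<lambda>\<^sup>d)\<close> is the zero polynomial.\<close>

definition cone_ideal :: "('a \<Rightarrow> complex) \<Rightarrow> 'a set" where
  "cone_ideal \<chi> = {x. \<forall>d. \<chi> (hcomp d x) = 0}"

context
  fixes \<chi> assumes \<chi>: "character \<chi>"
begin

lemma cone_ideal_iff: "x \<in> cone_ideal \<chi> \<longleftrightarrow> map_poly \<chi> (components x) = 0"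
  unfolding cone_ideal_def using \<chi> by (auto simp: poly_eq_iff coeff_map_poly hcomp_def)

lemma cone_ideal_prime: "is_prime_ideal (cone_ideal \<chi>)"
proof -
  have hom: "\<chi> 0 = 0" "\<And>x y. \<chi> (x + y) = \<chi> x + \<chi> y" "\<And>x y. \<chi> (x * y) = \<chi> x * \<chi> y"
    using \<chi> by (simp_all add: character_add character_mult)
  have add: "map_poly \<chi> (p + q) = map_poly \<chi> p + map_poly \<chi> q"
    and mult: "map_poly \<chi> (p * q) = map_poly \<chi> p * map_poly \<chi> q" for p q
    by (rule map_poly_add[where f = \<chi>, OF hom(1,2)], rule map_poly_mult[where f = \<chi>, OF hom])
  have "1 \<notin> cone_ideal \<chi>"
    using \<chi> components_homogeneous[OF one_in_Sd_0] by (simp add: cone_ideal_iff monom_0 map_poly_pCons)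
  then have "cone_ideal \<chi> \<noteq> UNIV" by blast
  then show ?thesis
    unfolding is_prime_ideal_def is_ideal_def
    by (auto simp: cone_ideal_iff add mult)
qed

lemma cone_ideal_homogeneous: "homogeneous_ideal Sd (cone_ideal \<chi>)"
  unfolding homogeneous_ideal_iff cone_ideal_def by (auto simp: hcomp_hcomp \<chi>)

lemma cone_ideal_subset_kernel:
  assumes "x \<in> cone_ideal \<chi>"
  shows "\<chi> x = 0"
proof -
  have "\<chi> x = \<chi> (\<Sum>d\<le>degree (components x). hcomp d x)" using sum_hcomp[of x] by (rule arg_cong)
  also have "\<dots> = 0" using assms by (simp add: character_sum[OF \<chi>] cone_ideal_def)
  finally show ?thesis .
qed

lemma cone_ideal_in_Proj_iff: "cone_ideal \<chi> \<in> Proj_pts Sd \<longleftrightarrow> \<not> irrelevant_ideal Sd \<subseteq> cone_ideal \<chi>"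
  unfolding Proj_pts_def using cone_ideal_prime cone_ideal_homogeneous by blast

end

end

section \<open>Linear systems of degree one\<close>

locale linear_system = graded_C_algebra +
  fixes V :: "'a set"
  assumes V_degree_one: "V \<subseteq> Sd 1"
begin

abbreviation CV :: "'a set" where
  "CV \<equiv> alg_gen emb V"

lemma hcomp_in_CV:
  assumes "x \<in> CV"
  shows "hcomp d x \<in> CV"
proof -
  from assms have "\<forall>d. hcomp d x \<in> CV"
  proof (induction rule: alg_gen_induct)
    case (emb c)
    then show ?case by (simp add: hcomp_emb alg_gen_emb alg_gen_0)
  next
    case (base v)
    then show ?case using V_degree_one by (auto simp: hcomp_homogeneous alg_gen_base alg_gen_0)
  next
    case (add x y)
    then show ?case by (simp add: hcomp_add alg_gen_add)
  next
    case (mult x y)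
    then show ?case by (auto simp: hcomp_mult intro!: alg_gen_sum alg_gen_mult)
  next
    case (uminus x)
    then show ?case by (simp add: hcomp_uminus alg_gen_uminus)
  qed
  then show ?thesis by blast
qed

lemma CV_minus_hcomp_0:
  assumes "x \<in> CV"
  shows "x - hcomp 0 x \<in> ideal_gen V"
  using assms
proof (induction rule: alg_gen_induct)
  case (emb c)
  then show ?case by (simp add: hcomp_emb ideal_0[OF is_ideal_ideal_gen])
next
  case (base v)
  then have "hcomp 0 v = 0" using V_degree_one by (auto simp: hcomp_homogeneous)
  then show ?case using base ideal_gen_superset by auto
next
  case (add x y)
  have "(x - hcomp 0 x) + (y - hcomp 0 y) \<in> ideal_gen V"
    using add by (rule ideal_add[OF is_ideal_ideal_gen])
  then show ?case by (simp add: hcomp_add algebra_simps)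
next
  case (mult x y)
  have "(x - hcomp 0 x) * y + hcomp 0 x * (y - hcomp 0 y) \<in> ideal_gen V"
    using mult by (intro ideal_add[OF is_ideal_ideal_gen] ideal_mult_left[OF is_ideal_ideal_gen]
        ideal_mult_right[OF is_ideal_ideal_gen])
  then show ?case by (simp add: hcomp_mult algebra_simps)
next
  case (uminus x)
  have "- (x - hcomp 0 x) \<in> ideal_gen V" using uminus by (rule ideal_uminus[OF is_ideal_ideal_gen])
  then show ?case by (simp add: hcomp_uminus algebra_simps)
qed

text \<open>A prime containing \<open>V\<close> meets \<open>\<complex>[V]\<close> in the irrelevant ideal of \<open>\<complex>[V]\<close>, i.e.\ it lies
  over the vertex of the cone \<open>V\<^sup>*\<close>.\<close>

lemma contract_V_eq_irrelevant:
  assumes P: "is_prime_ideal P" and "V \<subseteq> P"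
  shows "contract_V emb V P = contract_V emb V (irrelevant_ideal Sd)"
proof -
  have Pi: "is_ideal P" using P unfolding is_prime_ideal_def by blast
  have VP: "ideal_gen V \<subseteq> P" using ideal_gen_least[OF Pi \<open>V \<subseteq> P\<close>] .
  show ?thesis unfolding contract_V_def irrelevant_ideal_eq
  proof safe
    fix x assume x: "x \<in> P" "x \<in> CV"
    obtain c where c: "hcomp 0 x = emb c" using hcomp_0_in_range by blast
    have "x - emb c \<in> P" using CV_minus_hcomp_0[OF x(2)] c VP by auto
    then have "x - (x - emb c) \<in> P" using ideal_diff[OF Pi x(1)] by blast
    then have "c = 0" using emb_notin_prime_ideal[OF P] by auto
    then show "hcomp 0 x = 0" using c by simp
  next
    fix x assume "hcomp 0 x = 0" "x \<in> CV"
    then show "x \<in> P" using CV_minus_hcomp_0[of x] VP by auto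
  qed
qed

lemma injective_morphism_if_hat_injective:
  assumes "phiV_hat_injective emb V"
  shows "phiV_injective_morphism emb Sd V"
proof -
  have inj: "inj_on (contract_V emb V) Spec_pts"
    using assms unfolding phiV_hat_injective_def .
  have sub: "Proj_pts Sd \<subseteq> Spec_pts" unfolding Proj_pts_def Spec_pts_def by auto
  have "\<not> V \<subseteq> P" if P: "P \<in> Proj_pts Sd" for P
  proof
    assume "V \<subseteq> P"
    moreover have "is_prime_ideal P" using P unfolding Proj_pts_def by blast
    ultimately have "contract_V emb V P = contract_V emb V (irrelevant_ideal Sd)"
      by (intro contract_V_eq_irrelevant)
    then have "P = irrelevant_ideal Sd"
      using inj P sub irrelevant_ideal_in_Spec unfolding inj_on_def by blast
    then show False using P unfolding Proj_pts_def by blast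
  qed
  then show ?thesis unfolding phiV_injective_morphism_def using inj_on_subset[OF inj sub] by blast
qed

text \<open>\<open>V_times_Sd m\<close> is \<open>V \<cdot> S\<^sub>m\<close>, the degree \<open>m + 1\<close> part of the ideal generated by \<open>V\<close>.\<close>

inductive_set V_times_Sd :: "nat \<Rightarrow> 'a set" for m :: nat where
  zero: "0 \<in> V_times_Sd m"
| add: "x \<in> V_times_Sd m \<Longrightarrow> y \<in> V_times_Sd m \<Longrightarrow> x + y \<in> V_times_Sd m"
| gen: "v \<in> V \<Longrightarrow> s \<in> Sd m \<Longrightarrow> v * s \<in> V_times_Sd m"

lemma V_times_Sd_mult: "z \<in> V_times_Sd m \<Longrightarrow> r \<in> Sd i \<Longrightarrow> r * z \<in> V_times_Sd (i + m)"
proof (induction z rule: V_times_Sd.induct)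
  case (gen v s)
  have "r * s \<in> Sd (i + m)" using Sd_mult gen by blast
  with gen(1) have "v * (r * s) \<in> V_times_Sd (i + m)" by (rule V_times_Sd.gen)
  then show ?case by (simp add: ac_simps)
qed (auto simp: distrib_left intro: V_times_Sd.intros)

lemma V_times_Sd_sum: "(\<And>i. i \<in> I \<Longrightarrow> f i \<in> V_times_Sd m) \<Longrightarrow> sum f I \<in> V_times_Sd m"
  by (induction I rule: infinite_finite_induct) (auto intro: V_times_Sd.intros)

lemma V_times_Sd_smult: "z \<in> V_times_Sd m \<Longrightarrow> emb c * z \<in> V_times_Sd m"
  using V_times_Sd_mult[of z m "emb c" 0] Sd_0_eq by simp

lemma ideal_gen_V_hcomp:
  assumes "x \<in> ideal_gen V"
  shows "hcomp 0 x = 0" "hcomp (Suc d) x \<in> V_times_Sd d"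
proof -
  define J where "J = {x. hcomp 0 x = 0 \<and> (\<forall>d. hcomp (Suc d) x \<in> V_times_Sd d)}"
  have "is_ideal J" unfolding is_ideal_def
  proof (intro conjI ballI allI)
    show "0 \<in> J" unfolding J_def using hcomp_emb[of _ 0] by (simp add: V_times_Sd.zero)
  next
    fix x y assume "x \<in> J" "y \<in> J"
    then show "x + y \<in> J" unfolding J_def by (simp add: hcomp_add V_times_Sd.add)
  next
    fix x r assume x: "x \<in> J"
    have "hcomp i r * hcomp (Suc d - i) x \<in> V_times_Sd d" if "i \<le> Suc d" for i d
    proof (cases "i = Suc d")
      case False
      with that have "Suc d - i = Suc (d - i)" "i + (d - i) = d" by auto
      moreover have "hcomp (Suc (d - i)) x \<in> V_times_Sd (d - i)" using x unfolding J_def by blast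
      ultimately show ?thesis using V_times_Sd_mult[OF _ hcomp_in_Sd] by metis
    qed (use x in \<open>simp add: J_def V_times_Sd.zero\<close>)
    then show "r * x \<in> J" using x unfolding J_def by (auto simp: hcomp_mult intro: V_times_Sd_sum)
  qed
  moreover have "V \<subseteq> J"
  proof
    fix v assume v: "v \<in> V"
    then have "v * 1 \<in> V_times_Sd 0" using one_in_Sd_0 by (rule V_times_Sd.gen)
    then show "v \<in> J" unfolding J_def using v V_degree_one
      by (auto simp: hcomp_homogeneous V_times_Sd.zero)
  qed
  ultimately have "ideal_gen V \<subseteq> J" by (rule ideal_gen_least)
  with assms show "hcomp 0 x = 0" "hcomp (Suc d) x \<in> V_times_Sd d" unfolding J_def by blast+
qed

lemma homogeneous_in_ideal_V: "x \<in> ideal_gen V \<Longrightarrow> x \<in> Sd (Suc m) \<Longrightarrow> x \<in> V_times_Sd m"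
  using ideal_gen_V_hcomp(2)[of x m] by (simp add: hcomp_homogeneous)

lemma weighted_prod_in_V_times_Sd:
  assumes l: "\<And>q. q \<in> set l \<Longrightarrow> snd q \<in> Sd (fst q)"
    and p: "count_list l p \<ge> N" "fst p \<ge> 1" "N \<ge> 1" and power: "snd p ^ N \<in> ideal_gen V"
  shows "weighted_prod l \<in> V_times_Sd (weight l - 1)"
proof -
  obtain l' where l': "set l' \<subseteq> set l" "weighted_prod l = snd p ^ N * weighted_prod l'"
    "weight l = N * fst p + weight l'"
    using weighted_prod_extract_power[OF p(1)] by blast
  have "count_list l p \<noteq> 0" using p(1,3) by linarith
  then have "p \<in> set l" by (simp add: count_list_0_iff)
  then have "snd p ^ N \<in> Sd (Suc (N * fst p - 1))" using Sd_power[OF l] p(2,3) by simp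
  then have "snd p ^ N \<in> V_times_Sd (N * fst p - 1)" using power by (rule homogeneous_in_ideal_V[rotated])
  moreover have "weighted_prod l' \<in> Sd (weight l')"
    by (intro weighted_prod_in_Sd) (use l l'(1) in blast)
  ultimately have "weighted_prod l' * snd p ^ N \<in> V_times_Sd (weight l' + (N * fst p - 1))"
    by (rule V_times_Sd_mult)
  moreover have "weight l' + (N * fst p - 1) = weight l - 1" using l'(3) p(2,3) by simp
  ultimately show ?thesis using l'(2) by (simp add: ac_simps)
qed

text \<open>Where \<open>\<chi>\<close> does not vanish on \<open>V\<close>, any \<open>s\<close> agrees along the line through \<open>\<chi>\<close> with
  \<open>\<Sum>d. \<chi>(s\<^sub>d) / \<chi>(v\<^sub>0)\<^sup>d \<cdot> v\<^sub>0\<^sup>d \<in> \<complex>[V]\<close>.\<close>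

lemma CV_plus_cone_ideal:
  assumes \<chi>: "character \<chi>" and v0: "v0 \<in> V" "\<chi> v0 \<noteq> 0"
  obtains w where "w \<in> CV" "s - w \<in> cone_ideal \<chi>"
proof
  define N where "N = degree (components s)"
  define w where "w = (\<Sum>d\<le>N. emb (\<chi> (hcomp d s) / \<chi> v0 ^ d) * v0 ^ d)"
  have v0S: "v0 \<in> Sd 1" using v0(1) V_degree_one by blast
  show "w \<in> CV" unfolding w_def
    using v0(1) by (intro alg_gen_sum alg_gen_mult alg_gen_emb alg_gen_power alg_gen_base)
  have hv: "hcomp e (v0 ^ d) = (if e = d then v0 ^ d else 0)" for e d
    using hcomp_homogeneous[OF Sd_power[OF v0S]] by simp
  have hw: "hcomp e w = (if e \<le> N then emb (\<chi> (hcomp e s) / \<chi> v0 ^ e) * v0 ^ e else 0)" for e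
  proof -
    have "hcomp e w = (\<Sum>d\<le>N. emb (\<chi> (hcomp d s) / \<chi> v0 ^ d) * hcomp e (v0 ^ d))"
      unfolding w_def hcomp_sum hcomp_smult ..
    also have "\<dots> = (\<Sum>d\<le>N. if d = e then emb (\<chi> (hcomp d s) / \<chi> v0 ^ d) * v0 ^ d else 0)"
      by (intro sum.cong) (simp_all add: hv)
    finally show ?thesis by simp
  qed
  have "\<chi> (hcomp e (s - w)) = 0" for e
  proof (cases "e \<le> N")
    case True
    then show ?thesis using v0(2) \<chi>
      by (simp add: hcomp_diff hw character_diff character_mult character_power)
  next
    case False
    then have "hcomp e s = 0" unfolding N_def by (intro hcomp_beyond_degree) simp
    then show ?thesis using False \<chi> by (simp add: hcomp_diff hw)
  qed
  then show "s - w \<in> cone_ideal \<chi>" unfolding cone_ideal_def by blast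
qed

end

section \<open>Base-point-free linear systems\<close>

locale base_point_free = linear_system +
  assumes base_point_free: "\<forall>P\<in>Proj_pts Sd. \<not> V \<subseteq> P"
begin

lemma character_vanishing_on_V_eq_vertex:
  assumes \<chi>: "character \<chi>" and V0: "\<forall>v\<in>V. \<chi> v = 0"
  shows "\<chi> = vertex"
proof
  fix x
  have "V \<subseteq> cone_ideal \<chi>"
    using V0 V_degree_one \<chi> by (auto simp: cone_ideal_def hcomp_homogeneous)
  then have "cone_ideal \<chi> \<notin> Proj_pts Sd" using base_point_free by blast
  then have "irrelevant_ideal Sd \<subseteq> cone_ideal \<chi>" using cone_ideal_in_Proj_iff[OF \<chi>] by blast
  moreover have "x - hcomp 0 x \<in> irrelevant_ideal Sd"
    by (simp add: irrelevant_ideal_eq hcomp_diff hcomp_hcomp)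
  ultimately have "\<chi> (x - hcomp 0 x) = 0" using cone_ideal_subset_kernel[OF \<chi>] by blast
  then show "\<chi> x = vertex x" using \<chi> by (simp add: character_diff flip: emb_vertex)
qed

lemma homogeneous_power_in_ideal_V:
  assumes "g \<in> Sd e" "e \<ge> 1"
  shows "\<exists>N. g ^ N \<in> ideal_gen V"
proof (rule ccontr)
  assume "\<nexists>N. g ^ N \<in> ideal_gen V"
  then have "\<forall>k. g ^ k \<notin> ideal_gen V" by blast
  then obtain \<chi> where \<chi>: "character \<chi>" "\<forall>x\<in>ideal_gen V. \<chi> x = 0" "\<chi> g \<noteq> 0"
    using nullstellensatz[OF is_ideal_ideal_gen] by blast
  have "\<chi> = vertex" using character_vanishing_on_V_eq_vertex[OF \<chi>(1)] \<chi>(2) ideal_gen_superset by blast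
  moreover have "vertex g = 0" using assms by (simp add: vertex_eq_iff hcomp_homogeneous)
  ultimately show False using \<chi>(3) by simp
qed

lemma uniform_power_in_ideal_V:
  assumes "finite H" and "\<And>p. p \<in> H \<Longrightarrow> fst p \<ge> 1 \<and> snd p \<in> Sd (fst p)"
  obtains N where "N \<ge> 1" "\<And>p. p \<in> H \<Longrightarrow> snd p ^ N \<in> ideal_gen V"
proof -
  have "\<forall>p\<in>H. \<exists>N. snd p ^ N \<in> ideal_gen V"
    using homogeneous_power_in_ideal_V assms(2) by blast
  then obtain Nf where Nf: "\<And>p. p \<in> H \<Longrightarrow> snd p ^ Nf p \<in> ideal_gen V" by metis
  define N where "N = Max (insert 1 (Nf ` H))"
  have "N \<ge> 1" unfolding N_def using assms(1) by simp
  moreover have "snd p ^ N \<in> ideal_gen V" if "p \<in> H" for p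
  proof -
    have "Nf p \<le> N" unfolding N_def using assms(1) that by simp
    then have "snd p ^ N = snd p ^ (N - Nf p) * snd p ^ Nf p" by (simp flip: power_add)
    then show ?thesis using ideal_mult_left[OF is_ideal_ideal_gen Nf[OF that]] by metis
  qed
  ultimately show ?thesis using that by blast
qed

lemma high_degree_in_V_times_Sd:
  obtains D0 where "\<And>d. d > D0 \<Longrightarrow> Sd d \<subseteq> V_times_Sd (d - 1)"
proof -
  obtain H where H: "finite H" "\<And>p. p \<in> H \<Longrightarrow> fst p \<ge> 1 \<and> snd p \<in> Sd (fst p)"
    and span: "\<And>d x. x \<in> Sd d \<Longrightarrow> x \<in> vs.span (weighted_prod ` {l \<in> lists H. weight l = d})"
    by (rule homogeneous_generators) blast
  obtain N where "N \<ge> 1" and power: "\<And>p. p \<in> H \<Longrightarrow> snd p ^ N \<in> ideal_gen V"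
    using uniform_power_in_ideal_V[OF H] by blast
  define emax where "emax = Max (insert 1 (fst ` H))"
  show ?thesis
  proof (rule that)
    fix d assume d: "d > emax * (card H * N)"
    show "Sd d \<subseteq> V_times_Sd (d - 1)"
    proof
      fix x assume "x \<in> Sd d"
      from span[OF this] show "x \<in> V_times_Sd (d - 1)"
      proof (induction x rule: vs.span_induct_alt)
        case (step c b y)
        then obtain l where l: "set l \<subseteq> H" "weight l = d" "b = weighted_prod l"
          by (auto simp: in_lists_conv_set subset_iff)
        have "length l > card H * N"
        proof (rule ccontr)
          assume "\<not> ?thesis"
          then have "emax * length l \<le> emax * (card H * N)" by (intro mult_le_mono2) simp
          then show False using weight_le_Max_length[OF l(1) H(1)] l(2) d unfolding emax_def by linarith
        qed
        then obtain p where "p \<in> H" "count_list l p \<ge> N"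
          using long_list_frequent_element[OF l(1) H(1)] by blast
        then have "b \<in> V_times_Sd (d - 1)"
          using weighted_prod_in_V_times_Sd[where l = l and p = p and N = N] H(2) l power \<open>N \<ge> 1\<close> by blast
        then show ?case using step(2) by (intro V_times_Sd.add V_times_Sd_smult)
      qed (rule V_times_Sd.zero)
    qed
  qed
qed

lemma finite_over_CV: "finite_over CV"
proof -
  obtain D0 where high: "\<And>d. d > D0 \<Longrightarrow> Sd d \<subseteq> V_times_Sd (d - 1)"
    by (rule high_degree_in_V_times_Sd) blast
  obtain F where "\<And>d. finite (F d) \<and> Sd d \<subseteq> vs.span (F d)"
    using Sd_finite_dimensional by metis
  then have F: "\<And>d. finite (F d)" "\<And>d. Sd d \<subseteq> vs.span (F d)" by blast+
  define E where "E = (\<Union>d\<le>D0. F d)"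
  have "finite E" unfolding E_def using F(1) by blast
  have Sd_module: "Sd d \<subseteq> module_span CV E" for d
  proof (induction d rule: less_induct)
    case (less d)
    show ?case
    proof (cases "d \<le> D0")
      case True
      then have "vs.span (F d) \<subseteq> vs.span E" unfolding E_def by (intro vs.span_mono) blast
      then show ?thesis using F(2)[of d] span_subset_module_span[OF \<open>finite E\<close>] by blast
    next
      case False
      show ?thesis
      proof
        fix x assume "x \<in> Sd d"
        moreover have "D0 < d" using False by simp
        ultimately have "x \<in> V_times_Sd (d - 1)" using high by blast
        then show "x \<in> module_span CV E"
        proof (induction rule: V_times_Sd.induct)
          case (gen v s)
          then show ?case using less[of "d - 1"] False by (intro module_span_mult alg_gen_base) auto
        qed (auto intro: module_span_0 module_span_add)
      qed
    qed
  qed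
  have "x \<in> module_span CV E" for x
  proof -
    have "x = (\<Sum>d\<le>degree (components x). hcomp d x)" by (rule sum_hcomp)
    also have "\<dots> \<in> module_span CV E" using Sd_module hcomp_in_Sd by (intro module_span_sum) blast
    finally show ?thesis .
  qed
  then show ?thesis using \<open>finite E\<close> unfolding finite_over_def by blast
qed

lemma characters_agreeing_on_CV_eq:
  assumes inj: "inj_on (contract_V emb V) (Proj_pts Sd)"
    and \<chi>: "character \<chi>" and \<chi>': "character \<chi>'" and agree: "\<forall>x\<in>CV. \<chi> x = \<chi>' x"
  shows "\<chi> = \<chi>'"
proof (cases "\<forall>v\<in>V. \<chi> v = 0")
  case True
  moreover have "\<forall>v\<in>V. \<chi>' v = 0"
  proof
    fix v assume "v \<in> V"
    have "\<chi> v = \<chi>' v" using agree alg_gen_base[OF \<open>v \<in> V\<close>] by blast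
    then show "\<chi>' v = 0" using True \<open>v \<in> V\<close> by simp
  qed
  ultimately show ?thesis
    using character_vanishing_on_V_eq_vertex[OF \<chi>] character_vanishing_on_V_eq_vertex[OF \<chi>']
    by simp
next
  case False
  then obtain v0 where v0: "v0 \<in> V" "\<chi> v0 \<noteq> 0" by blast
  then have "\<chi>' v0 \<noteq> 0" using agree alg_gen_base[OF v0(1)] by simp
  have "v0 \<in> irrelevant_ideal Sd"
    using v0(1) V_degree_one by (auto simp: irrelevant_ideal_eq hcomp_homogeneous)
  moreover have "v0 \<notin> cone_ideal \<chi>" "v0 \<notin> cone_ideal \<chi>'"
    using cone_ideal_subset_kernel[OF \<chi>] cone_ideal_subset_kernel[OF \<chi>'] v0(2) \<open>\<chi>' v0 \<noteq> 0\<close> by blast+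
  ultimately have "cone_ideal \<chi> \<in> Proj_pts Sd" "cone_ideal \<chi>' \<in> Proj_pts Sd"
    using cone_ideal_in_Proj_iff[OF \<chi>] cone_ideal_in_Proj_iff[OF \<chi>'] by blast+
  moreover have "\<chi> (hcomp d x) = \<chi>' (hcomp d x)" if "x \<in> CV" for x d
    using agree hcomp_in_CV[OF that] by blast
  then have "contract_V emb V (cone_ideal \<chi>) = contract_V emb V (cone_ideal \<chi>')"
    unfolding contract_V_def cone_ideal_def by auto
  ultimately have cone: "cone_ideal \<chi> = cone_ideal \<chi>'" using inj unfolding inj_on_def by blast
  show ?thesis
  proof
    fix s
    obtain w where w: "w \<in> CV" "s - w \<in> cone_ideal \<chi>" using CV_plus_cone_ideal[OF \<chi> v0] .
    have "\<chi> (s - w) = 0" "\<chi>' (s - w) = 0"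
      using w(2) cone cone_ideal_subset_kernel[OF \<chi>] cone_ideal_subset_kernel[OF \<chi>'] by auto
    then show "\<chi> s = \<chi>' s" using agree w(1) \<chi> \<chi>' by (simp add: character_diff)
  qed
qed

lemma contract_V_eq_subset:
  assumes inj: "inj_on (contract_V emb V) (Proj_pts Sd)"
    and P: "is_prime_ideal P" and Q: "is_ideal Q" and PQ: "contract_V emb V P = contract_V emb V Q"
  shows "Q \<subseteq> P"
proof
  fix s assume "s \<in> Q"
  show "s \<in> P"
  proof (rule ccontr)
    assume "s \<notin> P"
    have "is_ideal P" using P unfolding is_prime_ideal_def by blast
    moreover have "\<forall>k. s ^ k \<notin> P" using prime_ideal_power_notin[OF P \<open>s \<notin> P\<close>] by blast
    ultimately obtain \<chi> where \<chi>: "character \<chi>" "\<forall>x\<in>P. \<chi> x = 0" "\<chi> s \<noteq> 0"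
      by (rule nullstellensatz) blast
    have "\<forall>x\<in>Q \<inter> CV. \<chi> x = 0" using PQ \<chi>(2) unfolding contract_V_def by blast
    then obtain \<chi>' where \<chi>': "character \<chi>'" "\<forall>x\<in>Q. \<chi>' x = 0" "\<forall>x\<in>CV. \<chi>' x = \<chi> x"
      by (rule lying_over_character[OF finite_over_CV Q \<chi>(1)]) blast
    have "\<chi> = \<chi>'" using characters_agreeing_on_CV_eq[OF inj \<chi>(1) \<chi>'(1)] \<chi>'(3) by simp
    then show False using \<chi>(3) \<chi>'(2) \<open>s \<in> Q\<close> by simp
  qed
qed

lemma hat_injective_if_injective_on_Proj:
  assumes "inj_on (contract_V emb V) (Proj_pts Sd)"
  shows "phiV_hat_injective emb V"
  unfolding phiV_hat_injective_def
proof (rule inj_onI)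
  fix P Q assume "P \<in> Spec_pts" "Q \<in> Spec_pts" and eq: "contract_V emb V P = contract_V emb V Q"
  then have P: "is_prime_ideal P" and Q: "is_prime_ideal Q" unfolding Spec_pts_def by auto
  have "Q \<subseteq> P" using contract_V_eq_subset[OF assms P _ eq] Q unfolding is_prime_ideal_def by blast
  moreover have "P \<subseteq> Q" using contract_V_eq_subset[OF assms Q _ eq[symmetric]] P
    unfolding is_prime_ideal_def by blast
  ultimately show "P = Q" by blast
qed

end

theorem lemma2p13:
  fixes emb :: "complex \<Rightarrow> 'a::comm_ring_1"
    and Sd :: "nat \<Rightarrow> 'a set"
    and V :: "'a set"
  assumes "fg_graded_C_algebra emb Sd"
    and "C_subspace emb V" and "V \<subseteq> Sd 1"
  shows "phiV_injective_morphism emb Sd V \<longleftrightarrow> phiV_hat_injective emb V"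
proof -
  interpret linear_system emb Sd V
    using assms(1,3) by unfold_locales
  show ?thesis
  proof
    assume "phiV_injective_morphism emb Sd V"
    then interpret base_point_free emb Sd V
      by unfold_locales (simp add: phiV_injective_morphism_def)
    show "phiV_hat_injective emb V"
      using \<open>phiV_injective_morphism emb Sd V\<close> hat_injective_if_injective_on_Proj
      unfolding phiV_injective_morphism_def by blast
  qed (rule injective_morphism_if_hat_injective)
qed

end
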